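(* Assume the $N$-cell system is $1$-controllable and let $\theta_j\in\partial D^{(j)}$ for some $1\le j\le N$. Then there exists an admissible path (of the $N$-cell system) between $\theta_j$ and $\partial\Gamma^{(1)}_{\rm L}$, and likewise one between $\theta_j$ and $\partial\Gamma^{(N)}_{\rm R}$.
   Context: Cell geometry. Let $\Gamma_{\rm box}\subset\mathbb{R}^2$ be a bounded connected closed domain such that $(x,y)\in\Gamma_{\rm box}$ implies $x\in[0,L]$. Its boundary is $\partial\Gamma_{\rm box}=\partial\Gamma_{\rm L}\cup\partial\Gamma_{\rm R}\cup\bigcup_{k=1}^b\partial\Gamma_k$, where $\partial\Gamma_{\rm L}=\{(0,y):y\in[-a,a]\}$ and $\partial\Gamma_{\rm R}=\{(L,y):y\in[-a,a]\}$ are the two "openings" ($a>0$), and each $\partial\Gamma_k$ is an arc of a circle $C_k$ with center $c_k$, the arcs being oriented so that $\partial\Gamma_{\rm box}$ is everywhere dispersing. In the interior of $\Gamma_{\rm box}$ lies a closed disk $D$ of center $(L/2,0)$ and radius $r$ with $\partial D\cap\partial\Gamma_{\rm box}=\emptyset$, and for every $z\in\partial\Gamma_{\rm box}$ the segment from the disk center to $z$ meets $\partial\Gamma_{\rm box}$ only at $z$. The cell is $\Gamma=\Gamma_{\rm box}\setminus D$; its corners are the points where two boundary pieces meet. Illumination and 1-controllability. For $k\in\{1,\dots,b\}$, let $I_k\subset\partial D$ be the largest open connected set of points $\theta\in\partial D$ such that a straight line leaving $\theta$ in some direction returns to $\theta$ after exactly one (specular) reflection, occurring on $\partial\Gamma_k$.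 The cell is $1$-controllable if $\bigcup_k I_k=\partial D$. Admissible path in a cell. A curve $\gamma:[0,1]\to\Gamma$, continuous and piecewise differentiable on $(0,1)$, is admissible if: (1) it consists of finitely many straight segments meeting at $\partial\Gamma_{\rm box}\cup\partial D$; (2) at meeting points on $\partial\Gamma_{\rm box}$ incoming and outgoing angles are equal; (3) only $\gamma(0),\gamma(1)$ may lie in $\partial\Gamma_{\rm L}\cup\partial\Gamma_{\rm R}$; (4) $\gamma$ never meets a corner; (5) $\gamma$ is nowhere tangent to $\partial D$. N-cell system. The system consists of $N$ identical copies $\Gamma^{(1)},\dots,\Gamma^{(N)}$ of the cell placed side by side horizontally (the $\ell$th copy translated by $((\ell-1)L,0)$), with disks $D^{(\ell)}$ and openings $\partial\Gamma^{(\ell)}_{\rm L},\partial\Gamma^{(\ell)}_{\rm R}$; the right opening of cell $\ell$ coincides with the left opening of cell $\ell+1$ and particles cross it freely. $\partial\Gamma^{(1)}_{\rm L}$ and $\partial\Gamma^{(N)}_{\rm R}$ are the exits to the baths. The system is $1$-controllable if the cell is. An admissible path of the $N$-cell system is a continuous path composed of finitely many admissible paths in the individual cells, concatenated at the internal openings. *)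

theory Defs
  imports "HOL-Analysis.Analysis"
begin

text \<open>Points of the plane are complex numbers; the x-coordinate is Re, the y-coordinate is Im.\<close>

definition left_opening :: "real \<Rightarrow> complex set" where
  "left_opening a = {Complex 0 y | y. -a \<le> y \<and> y \<le> a}"

definition right_opening :: "real \<Rightarrow> real \<Rightarrow> complex set" where
  "right_opening L a = {Complex L y | y. -a \<le> y \<and> y \<le> a}"

definition shift :: "real \<Rightarrow> complex set \<Rightarrow> complex set" where
  "shift s A = (\<lambda>z. z + complex_of_real s) ` A"

definition disk_center :: "real \<Rightarrow> complex" where
  "disk_center L = Complex (L/2) 0"

definition bpiece :: "real \<Rightarrow> real \<Rightarrow> nat \<Rightarrow> (nat \<Rightarrow> complex set) \<Rightarrow> nat \<Rightarrow> complex set" where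
  "bpiece L a b Arc k =
     (if k = 0 then left_opening a else if k = Suc b then right_opening L a else Arc k)"

definition corners :: "real \<Rightarrow> real \<Rightarrow> nat \<Rightarrow> (nat \<Rightarrow> complex set) \<Rightarrow> complex set" where
  "corners L a b Arc =
     {z. \<exists>i j. i \<le> Suc b \<and> j \<le> Suc b \<and> i \<noteq> j \<and> z \<in> bpiece L a b Arc i \<and> z \<in> bpiece L a b Arc j}"

text \<open>Standing geometric assumptions on a cell.  c k, rho k: center and radius of circle C_k;
  Arc k: the boundary arc on C_k; Gbox: the box.\<close>
definition cell_geometry ::
  "real \<Rightarrow> real \<Rightarrow> real \<Rightarrow> nat \<Rightarrow> (nat \<Rightarrow> complex) \<Rightarrow> (nat \<Rightarrow> real) \<Rightarrow> (nat \<Rightarrow> complex set)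
    \<Rightarrow> complex set \<Rightarrow> bool" where
  "cell_geometry L a r b c rho Arc Gbox \<longleftrightarrow>
     L > 0 \<and> a > 0 \<and> r > 0 \<and>
     bounded Gbox \<and> connected Gbox \<and> closed Gbox \<and>
     (\<exists>U. open U \<and> connected U \<and> Gbox = closure U) \<and>
     (\<forall>z\<in>Gbox. 0 \<le> Re z \<and> Re z \<le> L) \<and>
     frontier Gbox = left_opening a \<union> right_opening L a \<union> (\<Union>k\<in>{1..b}. Arc k) \<and>
     (\<forall>k\<in>{1..b}.
        rho k > 0 \<and>
        (\<exists>\<alpha> \<beta>. \<alpha> < \<beta> \<and> \<beta> < \<alpha> + 2 * pi \<and>
           Arc k = (\<lambda>t. c k + complex_of_real (rho k) * cis t) ` {\<alpha>..\<beta>}) \<and>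
        \<comment> \<open>dispersing: near the arc, the box lies outside the circle C_k\<close>
        (\<exists>e>0. \<forall>z\<in>Gbox. (\<exists>w\<in>Arc k. dist z w < e) \<longrightarrow> rho k \<le> dist z (c k))) \<and>
     cball (disk_center L) r \<subseteq> interior Gbox \<and>
     (\<forall>z\<in>frontier Gbox. closed_segment (disk_center L) z \<inter> frontier Gbox = {z})"

text \<open>The cell: box minus the (open interior of the) disk, so that the circle belongs to the cell.\<close>
definition cell :: "real \<Rightarrow> real \<Rightarrow> complex set \<Rightarrow> complex set" where
  "cell L r Gbox = Gbox - ball (disk_center L) r"

text \<open>Specular reflection at a point with normal n: the outgoing direction w is a positive
  multiple of the mirror image of the incoming direction u (equal angles).\<close>
definition specular :: "complex \<Rightarrow> complex \<Rightarrow> complex \<Rightarrow> bool" where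
  "specular n u w \<longleftrightarrow> (\<exists>s>0. w = s *\<^sub>R (u - (2 * (u \<bullet> n) / (n \<bullet> n)) *\<^sub>R n))"

text \<open>Points theta of the circle dD from which a straight line returns to theta after exactly one
  specular reflection, occurring on the arc k.\<close>
definition returns_via ::
  "real \<Rightarrow> real \<Rightarrow> real \<Rightarrow> nat \<Rightarrow> (nat \<Rightarrow> complex) \<Rightarrow> (nat \<Rightarrow> complex set) \<Rightarrow> complex set
    \<Rightarrow> nat \<Rightarrow> complex \<Rightarrow> bool" where
  "returns_via L a r b c Arc Gbox k \<theta> \<longleftrightarrow>
     \<theta> \<in> sphere (disk_center L) r \<and>
     (\<exists>p\<in>Arc k. p \<notin> corners L a b Arc \<and> p \<noteq> \<theta> \<and>
        open_segment \<theta> p \<inter> (frontier Gbox \<union> cball (disk_center L) r) = {} \<and>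
        specular (p - c k) (p - \<theta>) (\<theta> - p))"

definition illum ::
  "real \<Rightarrow> real \<Rightarrow> real \<Rightarrow> nat \<Rightarrow> (nat \<Rightarrow> complex) \<Rightarrow> (nat \<Rightarrow> complex set) \<Rightarrow> complex set
    \<Rightarrow> nat \<Rightarrow> complex set" where
  "illum L a r b c Arc Gbox k =
     {\<theta>. \<exists>U. openin (top_of_set (sphere (disk_center L) r)) U \<and> connected U \<and> \<theta> \<in> U \<and>
            (\<forall>\<eta>\<in>U. returns_via L a r b c Arc Gbox k \<eta>)}"

definition one_controllable ::
  "real \<Rightarrow> real \<Rightarrow> real \<Rightarrow> nat \<Rightarrow> (nat \<Rightarrow> complex) \<Rightarrow> (nat \<Rightarrow> complex set) \<Rightarrow> complex set \<Rightarrow> bool" where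
  "one_controllable L a r b c Arc Gbox \<longleftrightarrow>
     (\<Union>k\<in>{1..b}. illum L a r b c Arc Gbox k) = sphere (disk_center L) r"

text \<open>Admissible path in a single cell.  The curve gamma on [0,1] is piecewise affine with
  breakpoints ts (strictly increasing, from 0 to 1) and vertices vs.\<close>
definition cell_admissible ::
  "real \<Rightarrow> real \<Rightarrow> real \<Rightarrow> nat \<Rightarrow> (nat \<Rightarrow> complex) \<Rightarrow> (nat \<Rightarrow> complex set) \<Rightarrow> complex set
    \<Rightarrow> (real \<Rightarrow> complex) \<Rightarrow> bool" where
  "cell_admissible L a r b c Arc Gbox \<gamma> \<longleftrightarrow>
     (\<forall>t\<in>{0..1}. \<gamma> t \<in> cell L r Gbox) \<and>
     (\<exists>vs ts.
        length vs \<ge> 2 \<and> length ts = length vs \<and>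
        ts ! 0 = 0 \<and> ts ! (length ts - 1) = 1 \<and>
        (\<forall>i. Suc i < length ts \<longrightarrow> ts ! i < ts ! Suc i) \<and>
        (\<forall>i<length vs. \<gamma> (ts ! i) = vs ! i) \<and>
        \<comment> \<open>(1) finitely many nondegenerate straight segments ...\<close>
        (\<forall>i. Suc i < length vs \<longrightarrow> vs ! i \<noteq> vs ! Suc i \<and>
           (\<forall>t\<in>{ts ! i .. ts ! Suc i}.
              \<gamma> t = vs ! i + ((t - ts ! i) / (ts ! Suc i - ts ! i)) *\<^sub>R (vs ! Suc i - vs ! i))) \<and>
        \<comment> \<open>... meeting at the boundary of the box or at the circle\<close>
        (\<forall>i. 0 < i \<and> Suc i < length vs \<longrightarrow>
           vs ! i \<in> frontier Gbox \<union> sphere (disk_center L) r) \<and>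
        \<comment> \<open>(2) specular reflection at meeting points on the box boundary\<close>
        (\<forall>i k. 0 < i \<and> Suc i < length vs \<and> k \<in> {1..b} \<and> vs ! i \<in> Arc k \<longrightarrow>
           specular (vs ! i - c k) (vs ! i - vs ! (i - 1)) (vs ! Suc i - vs ! i)) \<and>
        \<comment> \<open>(5) nowhere tangent to the circle\<close>
        (\<forall>i. Suc i < length vs \<longrightarrow>
           (\<forall>z\<in>closed_segment (vs ! i) (vs ! Suc i). z \<in> sphere (disk_center L) r \<longrightarrow>
              (vs ! Suc i - vs ! i) \<bullet> (z - disk_center L) \<noteq> 0))) \<and>
     \<comment> \<open>(3) only the endpoints may lie on the openings\<close>
     (\<forall>t\<in>{0<..<1}. \<gamma> t \<notin> left_opening a \<union> right_opening L a) \<and>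
     \<comment> \<open>(4) never meets a corner\<close>
     (\<forall>t\<in>{0..1}. \<gamma> t \<notin> corners L a b Arc)"

text \<open>Admissible path of the N-cell system (cell l translated by (l-1)L): a continuous path
  on [0,1] split at ss into finitely many pieces, piece i lying (after translating back) as an
  admissible path in cell ls!i, consecutive pieces in different cells, joined at internal openings.\<close>
definition system_admissible ::
  "real \<Rightarrow> real \<Rightarrow> real \<Rightarrow> nat \<Rightarrow> (nat \<Rightarrow> complex) \<Rightarrow> (nat \<Rightarrow> complex set) \<Rightarrow> complex set
    \<Rightarrow> nat \<Rightarrow> (real \<Rightarrow> complex) \<Rightarrow> bool" where
  "system_admissible L a r b c Arc Gbox N \<gamma> \<longleftrightarrow>
     continuous_on {0..1} \<gamma> \<and>
     (\<exists>ss ls.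
        length ss \<ge> 2 \<and> length ls = length ss - 1 \<and>
        ss ! 0 = 0 \<and> ss ! (length ss - 1) = 1 \<and>
        (\<forall>i. Suc i < length ss \<longrightarrow> ss ! i < ss ! Suc i) \<and>
        (\<forall>i<length ls. ls ! i \<in> {1..N} \<and>
           cell_admissible L a r b c Arc Gbox
             (\<lambda>t. \<gamma> (ss ! i + t * (ss ! Suc i - ss ! i))
                    - complex_of_real (real (ls ! i - 1) * L))) \<and>
        (\<forall>i. 0 < i \<and> i < length ls \<longrightarrow>
           ls ! (i - 1) \<noteq> ls ! i \<and>
           (\<exists>l\<in>{1..<N}. \<gamma> (ss ! i) \<in> shift (real l * L) (left_opening a))))"

end

theory Submission
  imports Defs
begin

text \<open>By 1-controllability every point \<theta> of \<partial>D has a neighbourhood on \<partial>D all of whose points are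
  reached from \<theta> by a path with one reflection on an arc: returning rays hit the arcs along normals,
  and between the feet of the normals through \<theta> and a nearby \<eta> the intermediate value theorem
  finds the point of the arc reflecting \<theta> into \<eta>. As \<partial>D is connected, any two of its points are
  joined by an admissible path, and a non-corner point of \<partial>\<Gamma>_box is joined to \<partial>D by the radial
  segment towards the disk centre. Fix a height y0 at which neither (0, y0) nor (L, y0) is a corner.
  Admissible paths in one cell from \<theta> to these exits and between them, concatenated through the
  cells j, j - 1, ..., 1 (or j, j + 1, ..., N), give the required paths of the N-cell system.\<close>

section \<open>Polygonal paths\<close>

fun polyline_param :: "'a::real_vector list \<Rightarrow> real \<Rightarrow> 'a" where
  "polyline_param [] s = 0"
| "polyline_param [v] s = v"
| "polyline_param (v # w # vs) s =
     (if s \<le> 1 then v + s *\<^sub>R (w - v) else polyline_param (w # vs) (s - 1))"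

definition polyline :: "'a::real_vector list \<Rightarrow> real \<Rightarrow> 'a" where
  "polyline vs t = polyline_param vs (real (length vs - 1) * t)"

lemma polyline_param_edge:
  "Suc i < length vs \<Longrightarrow> real i \<le> s \<Longrightarrow> s \<le> real i + 1 \<Longrightarrow>
   polyline_param vs s = vs ! i + (s - real i) *\<^sub>R (vs ! Suc i - vs ! i)"
proof (induction vs s arbitrary: i rule: polyline_param.induct)
  case (3 v w vs s)
  show ?case
  proof (cases i)
    case (Suc i')
    show ?thesis
    proof (cases "s \<le> 1")
      case True
      then have "s = 1" "i = 1" using 3 Suc by auto
      then show ?thesis by simp
    next
      case False
      then show ?thesis using 3 Suc by (auto simp: algebra_simps)
    qed
  qed (use 3 in simp)
qed auto

lemma polyline_param_0: "vs \<noteq> [] \<Longrightarrow> polyline_param vs 0 = hd vs"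
  by (induction vs rule: induct_list012) auto

lemma polyline_param_last: "vs \<noteq> [] \<Longrightarrow> polyline_param vs (real (length vs - 1)) = last vs"
  by (induction vs "real (length vs - 1)" rule: polyline_param.induct) auto

lemma polyline_param_translate:
  "vs \<noteq> [] \<Longrightarrow> polyline_param (map (\<lambda>z. z + d) vs) s = polyline_param vs s + d"
  by (induction vs s rule: polyline_param.induct) (auto simp: algebra_simps)

lemma polyline_param_append_left:
  "vs \<noteq> [] \<Longrightarrow> 0 \<le> s \<Longrightarrow> s \<le> real (length vs - 1) \<Longrightarrow>
   polyline_param (vs @ ws) s = polyline_param vs s"
proof (induction vs s rule: polyline_param.induct)
  case (2 v s)
  then show ?case by (cases ws) auto
qed auto

lemma polyline_param_append_right:
  "vs \<noteq> [] \<Longrightarrow> ws \<noteq> [] \<Longrightarrow> last vs = hd ws \<Longrightarrow> 0 \<le> s \<Longrightarrow>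
   polyline_param (vs @ tl ws) (real (length vs - 1) + s) = polyline_param ws s"
proof (induction vs arbitrary: s rule: induct_list012)
  case (2 v)
  then show ?case by (cases ws) (auto simp: polyline_param_0)
next
  case (3 u v vs)
  have "polyline_param ((v # vs) @ tl ws) (real (length (v # vs) - 1) + s) = polyline_param ws s"
    using 3 by simp
  moreover have "vs = [] \<and> s = 0" if "real (length (u # v # vs) - 1) + s \<le> 1"
    using that "3.prems"(4) by (cases vs) auto
  ultimately show ?case
    using "3.prems" by (auto simp: polyline_param_0 algebra_simps)
qed simp

lemma continuous_on_polyline_param:
  fixes vs :: "'a::real_normed_vector list"
  shows "continuous_on {0..real (length vs - 1)} (polyline_param vs)"
proof (induction vs rule: induct_list012)
  case (3 v w vs)
  have first: "continuous_on {0..1} (polyline_param (v # w # vs))"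
    by (rule continuous_on_eq[of _ "\<lambda>s. v + s *\<^sub>R (w - v)"]) (auto intro!: continuous_intros)
  have "continuous_on {1..real (length (v # w # vs) - 1)} (\<lambda>s. polyline_param (w # vs) (s - 1))"
    by (rule continuous_on_compose2[OF "3.IH"(2)]) (auto intro!: continuous_intros)
  then have rest: "continuous_on {1..real (length (v # w # vs) - 1)} (polyline_param (v # w # vs))"
    by (rule continuous_on_eq) (auto simp: polyline_param_0)
  have "{0..real (length (v # w # vs) - 1)} = {0..1} \<union> {1..real (length (v # w # vs) - 1)}"
    by auto
  then show ?case
    using continuous_on_closed_Un[OF closed_atLeastAtMost closed_atLeastAtMost first rest] by simp
qed auto

lemma polyline_0: "vs \<noteq> [] \<Longrightarrow> polyline vs 0 = hd vs"
  by (simp add: polyline_def polyline_param_0)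

lemma polyline_1: "vs \<noteq> [] \<Longrightarrow> polyline vs 1 = last vs"
  using polyline_param_last[of vs] by (simp add: polyline_def)

lemma polyline_translate: "vs \<noteq> [] \<Longrightarrow> polyline (map (\<lambda>z. z + d) vs) t = polyline vs t + d"
  by (simp add: polyline_def polyline_param_translate)

lemma continuous_on_polyline:
  fixes vs :: "'a::real_normed_vector list"
  shows "continuous_on {0..1} (polyline vs)"
  unfolding polyline_def
  by (rule continuous_on_compose2[OF continuous_on_polyline_param])
     (auto intro!: continuous_intros mult_right_le_one_le)

lemma unit_interval_index_exists:
  assumes "2 \<le> n" "0 \<le> s" "s \<le> real (n - 1)"
  shows "\<exists>i. Suc i < n \<and> real i \<le> s \<and> s \<le> real i + 1"
proof -
  define i where "i = min (n - 2) (nat \<lfloor>s\<rfloor>)"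
  have "real (nat \<lfloor>s\<rfloor>) \<le> s" "s < real (nat \<lfloor>s\<rfloor>) + 1"
    using assms by linarith+
  moreover have "real (n - 2) \<le> s" if "n - 2 \<le> nat \<lfloor>s\<rfloor>"
    using that \<open>real (nat \<lfloor>s\<rfloor>) \<le> s\<close> by (meson of_nat_le_iff order_trans)
  ultimately show ?thesis
    using assms by (intro exI[of _ i]) (auto simp: i_def min_def of_nat_diff)
qed

lemma polyline_breakpoints:
  fixes vs :: "'a::real_vector list"
  assumes n: "2 \<le> length vs"
  defines "ts \<equiv> map (\<lambda>i. real i / real (length vs - 1)) [0..<length vs]"
  shows "length ts = length vs" and "ts ! 0 = 0" and "ts ! (length ts - 1) = 1"
    and "\<forall>i. Suc i < length ts \<longrightarrow> ts ! i < ts ! Suc i"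
    and "\<forall>i<length vs. polyline vs (ts ! i) = vs ! i"
    and "\<forall>i<length ts. ts ! i \<in> {0..1}"
    and "\<forall>i. Suc i < length vs \<longrightarrow> (\<forall>t\<in>{ts ! i .. ts ! Suc i}.
           polyline vs t = vs ! i + ((t - ts ! i) / (ts ! Suc i - ts ! i)) *\<^sub>R (vs ! Suc i - vs ! i))"
proof -
  define m where "m = length vs - 1"
  have m: "real m \<ge> 1" using n by (simp add: m_def)
  have tsi: "ts ! i = real i / real m" if "i < length vs" for i
    using that by (simp add: ts_def m_def)
  show "length ts = length vs" by (simp add: ts_def)
  show "ts ! 0 = 0" using tsi[of 0] n by force
  show "ts ! (length ts - 1) = 1" using tsi[of m] n m by (simp add: ts_def m_def)
  show "\<forall>i. Suc i < length ts \<longrightarrow> ts ! i < ts ! Suc i"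
    using tsi m by (auto simp: ts_def divide_strict_right_mono)
  show "\<forall>i<length vs. polyline vs (ts ! i) = vs ! i"
  proof (intro allI impI)
    fix i assume i: "i < length vs"
    have "polyline vs (ts ! i) = polyline_param vs (real i)"
      using tsi[OF i] m by (simp add: polyline_def m_def)
    also have "\<dots> = vs ! i"
    proof (cases "Suc i < length vs")
      case True then show ?thesis using polyline_param_edge[OF True] by simp
    next
      case False
      then have "i = m" using i by (simp add: m_def)
      moreover have "vs \<noteq> []" using n by auto
      ultimately show ?thesis using polyline_param_last[of vs] by (simp add: m_def last_conv_nth)
    qed
    finally show "polyline vs (ts ! i) = vs ! i" .
  qed
  show "\<forall>i<length ts. ts ! i \<in> {0..1}"
    using tsi m by (auto simp: ts_def m_def divide_le_eq_1)
  show "\<forall>i. Suc i < length vs \<longrightarrow> (\<forall>t\<in>{ts ! i .. ts ! Suc i}.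
           polyline vs t = vs ! i + ((t - ts ! i) / (ts ! Suc i - ts ! i)) *\<^sub>R (vs ! Suc i - vs ! i))"
  proof (intro allI impI ballI)
    fix i t assume i: "Suc i < length vs" and t: "t \<in> {ts ! i .. ts ! Suc i}"
    have ti: "ts ! i = real i / real m" "ts ! Suc i = (real i + 1) / real m"
      using tsi i by auto
    have "real m * ts ! i \<le> real m * t" "real m * t \<le> real m * ts ! Suc i"
      using t by (auto intro: mult_left_mono)
    then have "real i \<le> real m * t" "real m * t \<le> real i + 1"
      using ti m by auto
    moreover have "(t - ts ! i) / (ts ! Suc i - ts ! i) = real m * t - real i"
      unfolding ti using m by (simp add: field_simps)
    ultimately show "polyline vs t = vs ! i + ((t - ts ! i) / (ts ! Suc i - ts ! i)) *\<^sub>R (vs ! Suc i - vs ! i)"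
      using polyline_param_edge[OF i] by (simp add: polyline_def m_def)
  qed
qed

lemma polyline_in_edge:
  assumes "2 \<le> length vs" "t \<in> {0..1}"
  shows "\<exists>i. Suc i < length vs \<and> polyline vs t \<in> closed_segment (vs ! i) (vs ! Suc i)"
proof -
  define m where "m = length vs - 1"
  obtain i where i: "Suc i < length vs" "real i \<le> real m * t" "real m * t \<le> real i + 1"
    using unit_interval_index_exists[of "length vs" "real m * t"] assms by (auto simp: m_def)
  then have "polyline vs t = (1 - (real m * t - real i)) *\<^sub>R vs ! i + (real m * t - real i) *\<^sub>R vs ! Suc i"
    using polyline_param_edge[OF i(1), of "real m * t"] by (simp add: polyline_def m_def algebra_simps)
  then show ?thesis
    using i unfolding closed_segment_def by (intro exI[of _ i]) force
qed

lemma polyline_inner_point: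
  assumes "2 \<le> length vs" "t \<in> {0<..<1}"
  shows "(\<exists>i. 0 < i \<and> Suc i < length vs \<and> polyline vs t = vs ! i) \<or>
    (\<exists>i u. Suc i < length vs \<and> 0 < u \<and> u < 1 \<and> polyline vs t = (1 - u) *\<^sub>R vs ! i + u *\<^sub>R vs ! Suc i)"
proof -
  define m where "m = length vs - 1"
  have s: "0 < real m * t" "real m * t < real m" using assms by (auto simp: m_def)
  obtain i where i: "Suc i < length vs" "real i \<le> real m * t" "real m * t \<le> real i + 1"
    using unit_interval_index_exists[of "length vs" "real m * t"] assms by (auto simp: m_def)
  define u where "u = real m * t - real i"
  have pt: "polyline vs t = (1 - u) *\<^sub>R vs ! i + u *\<^sub>R vs ! Suc i"
    using polyline_param_edge[OF i(1), of "real m * t"] i by (simp add: polyline_def m_def u_def algebra_simps)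
  consider "u = 0" | "u = 1" | "0 < u \<and> u < 1" using i by (force simp: u_def)
  then show ?thesis
  proof cases
    case 1
    then have "0 < i" using s by (auto simp: u_def)
    then show ?thesis using pt 1 i by auto
  next
    case 2
    then have "Suc (Suc i) < length vs" using s by (simp add: u_def m_def)
    then show ?thesis using pt 2 by (intro disjI1 exI[of _ "Suc i"]) auto
  next
    case 3
    then show ?thesis using pt i by blast
  qed
qed

fun join_walks :: "'a list list \<Rightarrow> 'a list" where
  "join_walks [] = []"
| "join_walks [w] = w"
| "join_walks (w # w' # ws) = w @ tl (join_walks (w' # ws))"

definition chained :: "'a list list \<Rightarrow> bool" where
  "chained ws \<longleftrightarrow> (\<forall>w\<in>set ws. 2 \<le> length w) \<and>
     (\<forall>i. Suc i < length ws \<longrightarrow> last (ws ! i) = hd (ws ! Suc i))"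

lemma chained_Cons:
  "chained (w # ws) \<longleftrightarrow> 2 \<le> length w \<and> chained ws \<and> (ws \<noteq> [] \<longrightarrow> last w = hd (hd ws))"
  unfolding chained_def
  by (cases ws) (auto simp: nth_Cons split: nat.splits)

lemma join_walks_basic:
  "ws \<noteq> [] \<Longrightarrow> chained ws \<Longrightarrow>
   2 \<le> length (join_walks ws) \<and> hd (join_walks ws) = hd (hd ws) \<and>
   last (join_walks ws) = last (last ws) \<and>
   real (length (join_walks ws) - 1) = (\<Sum>w\<leftarrow>ws. real (length w - 1))"
proof (induction ws rule: join_walks.induct)
  case (3 w w' ws)
  have w: "w \<noteq> []" "2 \<le> length w" "last w = hd w'" "chained (w' # ws)"
    using "3.prems" by (auto simp: chained_Cons)
  have J: "2 \<le> length (join_walks (w' # ws))" "hd (join_walks (w' # ws)) = hd w'"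
    "last (join_walks (w' # ws)) = last (last (w' # ws))"
    "real (length (join_walks (w' # ws)) - 1) = (\<Sum>w\<leftarrow>w' # ws. real (length w - 1))"
    using "3.IH"[OF _ w(4)] by auto
  have "tl (join_walks (w' # ws)) \<noteq> []" using J(1) by (simp flip: length_greater_0_conv)
  then show ?case using J w(1,2) by (simp add: of_nat_diff last_tl)
qed (auto simp: chained_def)

lemma polyline_param_join_walks:
  "chained ws \<Longrightarrow> i < length ws \<Longrightarrow> 0 \<le> s \<Longrightarrow> s \<le> real (length (ws ! i) - 1) \<Longrightarrow>
   polyline_param (join_walks ws) ((\<Sum>w\<leftarrow>take i ws. real (length w - 1)) + s) = polyline_param (ws ! i) s"
proof (induction ws arbitrary: i rule: join_walks.induct)
  case (3 w w' ws)
  have w: "w \<noteq> []" "2 \<le> length w" "last w = hd w'" "chained (w' # ws)"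
    using "3.prems"(1) by (auto simp: chained_Cons)
  have j: "join_walks (w' # ws) \<noteq> []" "hd (join_walks (w' # ws)) = hd w'"
    using join_walks_basic[OF _ w(4)] by auto
  show ?case
  proof (cases i)
    case 0
    then show ?thesis
      using polyline_param_append_left[of w s "tl (join_walks (w' # ws))"] w "3.prems" by auto
  next
    case (Suc i')
    have "0 \<le> (\<Sum>w\<leftarrow>take i' (w' # ws). real (length w - 1))"
      by (rule sum_list_nonneg) auto
    then have "0 \<le> (\<Sum>w\<leftarrow>take i' (w' # ws). real (length w - 1)) + s"
      using "3.prems"(3) by simp
    then have "polyline_param (join_walks (w # w' # ws)) ((\<Sum>w\<leftarrow>take i (w # w' # ws). real (length w - 1)) + s)
        = polyline_param (join_walks (w' # ws)) ((\<Sum>w\<leftarrow>take i' (w' # ws). real (length w - 1)) + s)"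
      using polyline_param_append_right[of w "join_walks (w' # ws)"] w j Suc by (auto simp: add.assoc)
    also have "\<dots> = polyline_param ((w' # ws) ! i') s"
      using "3.IH"[of i'] w "3.prems" Suc by auto
    finally show ?thesis using Suc by simp
  qed
qed (auto simp: chained_def)

lemma polyline_join_walks_breakpoints:
  fixes ws :: "'a::real_vector list list"
  assumes ch: "chained ws" and ne: "ws \<noteq> []"
  obtains ss where "length ss = Suc (length ws)" "ss ! 0 = 0" "ss ! length ws = 1"
    "\<And>i. i < length ws \<Longrightarrow> ss ! i < ss ! Suc i"
    "\<And>i t. i < length ws \<Longrightarrow> t \<in> {0..1} \<Longrightarrow>
       polyline (join_walks ws) (ss ! i + t * (ss ! Suc i - ss ! i)) = polyline (ws ! i) t"
proof -
  define m where "m = length ws"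
  define K where "K = (\<lambda>i. \<Sum>w\<leftarrow>take i ws. real (length w - 1))"
  define ss where "ss = map (\<lambda>i. K i / K m) [0..<Suc m]"
  have len: "2 \<le> length (join_walks ws)" "real (length (join_walks ws) - 1) = K m"
    using join_walks_basic[OF ne ch] by (simp_all add: K_def m_def)
  then have Km: "K m > 0" by simp
  have step: "K (Suc i) = K i + real (length (ws ! i) - 1)" if "i < m" for i
    using that by (simp add: K_def m_def take_Suc_conv_app_nth)
  have ws2: "2 \<le> length (ws ! i)" if "i < m" for i using ch that by (simp add: chained_def m_def)
  have ssi: "ss ! i = K i / K m" if "i \<le> m" for i
    using that by (simp add: ss_def nth_map_upt del: upt_Suc)
  show thesis
  proof (rule that[of ss])
    show "length ss = Suc (length ws)" by (simp add: ss_def m_def)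
    show "ss ! 0 = 0" using ssi[of 0] by (simp add: K_def)
    show "ss ! length ws = 1" using ssi[of m] Km by (simp add: m_def)
    show "ss ! i < ss ! Suc i" if "i < length ws" for i
      using that ssi[of i] ssi[of "Suc i"] step[of i] ws2[of i] Km
      by (simp add: m_def divide_strict_right_mono)
    fix i and t :: real assume i: "i < length ws" and t: "t \<in> {0..1}"
    have "K m * (ss ! i + t * (ss ! Suc i - ss ! i)) = K i + t * real (length (ws ! i) - 1)"
      using ssi[of i] ssi[of "Suc i"] step[of i] i Km by (simp add: m_def field_simps)
    then have "polyline (join_walks ws) (ss ! i + t * (ss ! Suc i - ss ! i))
        = polyline_param (join_walks ws) (K i + t * real (length (ws ! i) - 1))"
      unfolding polyline_def len(2) by simp
    also have "\<dots> = polyline_param (ws ! i) (t * real (length (ws ! i) - 1))"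
      using polyline_param_join_walks[OF ch i] t by (simp add: K_def mult_left_le_one_le)
    also have "\<dots> = polyline (ws ! i) t" by (simp add: polyline_def mult.commute)
    finally show "polyline (join_walks ws) (ss ! i + t * (ss ! Suc i - ss ! i)) = polyline (ws ! i) t" .
  qed
qed
section \<open>Plane geometry\<close>

lemma power2_norm_line:
  fixes x d q :: "'a::real_inner"
  shows "(norm (x + t *\<^sub>R d - q))\<^sup>2 = (norm (x - q))\<^sup>2 + 2 * t * (d \<bullet> (x - q)) + t\<^sup>2 * (norm d)\<^sup>2"
proof -
  have "x + t *\<^sub>R d - q = (x - q) + t *\<^sub>R d" by simp
  then show ?thesis
    by (simp only: power2_norm_eq_inner inner_add_left inner_add_right inner_scaleR_left
        inner_scaleR_right inner_commute[of d "x - q"])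
       (simp add: power2_eq_square algebra_simps)
qed

lemma outward_step_leaves_sphere:
  fixes x d q :: "'a::real_inner"
  assumes "norm (x - q) = R" "d \<bullet> (x - q) > 0" "t > 0"
  shows "norm (x + t *\<^sub>R d - q) > R"
proof -
  have "(norm (x + t *\<^sub>R d - q))\<^sup>2 > R\<^sup>2"
    unfolding power2_norm_line using assms by (simp add: add_pos_nonneg)
  moreover have "R \<ge> 0" using assms(1) by auto
  ultimately show ?thesis using power2_less_imp_less norm_ge_zero by blast
qed

lemma inward_step_enters_ball:
  fixes x d q :: "'a::real_inner"
  assumes "d \<bullet> (x - q) < 0"
  shows "\<exists>t. 0 < t \<and> t < 1 \<and> norm (x + t *\<^sub>R d - q) < norm (x - q)"
proof -
  define D where "D = d \<bullet> (x - q)"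
  have nd: "(norm d)\<^sup>2 > 0" using assms by auto
  define t where "t = min (1/2) (- D / (norm d)\<^sup>2)"
  have "- D / (norm d)\<^sup>2 > 0" using assms nd D_def by (intro divide_pos_pos) auto
  then have t: "0 < t" "t < 1" "t * (norm d)\<^sup>2 \<le> - D"
    using nd by (auto simp: t_def min_def field_simps)
  then have "t\<^sup>2 * (norm d)\<^sup>2 \<le> t * (- D)"
    by (metis mult.assoc mult_left_mono less_le power2_eq_square)
  moreover have "t * D < 0" using t(1) assms D_def by (simp add: mult_pos_neg)
  ultimately have "(norm (x + t *\<^sub>R d - q))\<^sup>2 < (norm (x - q))\<^sup>2"
    unfolding power2_norm_line D_def by linarith
  then show ?thesis using t power2_less_imp_less norm_ge_zero by blast
qed

lemma open_segment_subset_interior: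
  fixes z q :: "'a::real_normed_vector"
  assumes z: "z \<in> interior S" and avoid: "open_segment z q \<inter> frontier S = {}"
  shows "open_segment z q \<subseteq> interior S"
proof (rule ccontr)
  assume not_sub: "\<not> open_segment z q \<subseteq> interior S"
  then have zq: "z \<noteq> q" by auto
  obtain e where e: "e > 0" "ball z e \<subseteq> interior S"
    using z open_interior open_contains_ball by blast
  define t where "t = min (1/2) (e / (2 * norm (q - z)))"
  have nq: "norm (q - z) > 0" using zq by simp
  have t: "0 < t" "t < 1" using e nq by (auto simp: t_def)
  define w where "w = z + t *\<^sub>R (q - z)"
  have "w = (1 - t) *\<^sub>R z + t *\<^sub>R q" by (simp add: w_def algebra_simps)
  then have w_seg: "w \<in> open_segment z q" using t zq unfolding in_segment(2) by blast
  have "dist z w = t * norm (q - z)" using t(1) by (simp add: w_def dist_norm)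
  also have "\<dots> \<le> (e / (2 * norm (q - z))) * norm (q - z)"
    using nq by (intro mult_right_mono) (auto simp: t_def)
  also have "\<dots> < e" using nq e by simp
  finally have "w \<in> interior S" using e by auto
  then have "open_segment z q \<inter> frontier (interior S) \<noteq> {}"
    using not_sub w_seg connected_Int_frontier[of "open_segment z q" "interior S"]
      convex_connected convex_open_segment by blast
  then show False using avoid frontier_interior_subset by blast
qed

lemma norm_cis_diff_power2: "(cmod (cis x - cis y))\<^sup>2 = 2 - 2 * cos (x - y)"
proof -
  have "(cmod (cis x - cis y))\<^sup>2 = (cos x - cos y)\<^sup>2 + (sin x - sin y)\<^sup>2"
    by (simp add: cmod_power2)
  also have "\<dots> = (sin x)\<^sup>2 + (cos x)\<^sup>2 + ((sin y)\<^sup>2 + (cos y)\<^sup>2) - 2 * (cos x * cos y + sin x * sin y)"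
    by (simp add: power2_eq_square algebra_simps)
  also have "\<dots> = 2 - 2 * cos (x - y)" by (simp add: cos_diff)
  finally show ?thesis .
qed

lemma norm_cis_diff_le: "cmod (cis x - cis y) \<le> \<bar>x - y\<bar>"
proof -
  have "2 * ((x - y) / 2) = x - y" by simp
  then have "cos (x - y) = 1 - 2 * (sin ((x - y) / 2))\<^sup>2"
    using cos_double_sin[of "(x - y)/2"] by metis
  then have "(cmod (cis x - cis y))\<^sup>2 = 4 * (sin ((x - y) / 2))\<^sup>2"
    using norm_cis_diff_power2 by simp
  also have "\<dots> \<le> 4 * ((x - y) / 2)\<^sup>2"
    using abs_sin_x_le_abs_x[of "(x - y)/2"] abs_le_square_iff[of "sin ((x - y) / 2)" "(x - y)/2"]
    by simp
  also have "\<dots> = \<bar>x - y\<bar>\<^sup>2" by (simp add: power2_eq_square field_simps)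
  finally show ?thesis by (simp add: abs_le_square_iff[symmetric])
qed

lemma IVT_product_nonpos:
  fixes g :: "real \<Rightarrow> real"
  assumes "continuous_on {min a b..max a b} g" "g a * g b \<le> 0"
  shows "\<exists>t\<in>{min a b..max a b}. g t = 0"
proof -
  have "\<exists>t\<in>{a..b}. g t = 0"
    if ab: "a \<le> b" and cont: "continuous_on {a..b} g" and sign: "g a * g b \<le> 0" for a b
  proof (cases "g a \<le> 0")
    case True
    then consider "0 \<le> g b" | "g a = 0" using sign by (auto simp: mult_le_0_iff)
    then show ?thesis
      by cases (use IVT'[of g a 0 b] True ab cont in auto)
  next
    case False
    then have "g b \<le> 0" using sign by (auto simp: mult_le_0_iff)
    then show ?thesis using IVT2'[of g b 0 a] False ab cont by auto
  qed
  from this[of a b] this[of b a] assms show ?thesis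
    by (cases "a \<le> b") (auto simp: mult.commute)
qed

lemma inner_pos_near:
  fixes x0 y0 q :: "'a::real_inner"
  assumes "(y0 - x0) \<bullet> (x0 - q) > 0"
  shows "\<exists>d>0. \<forall>x y. dist x x0 < d \<longrightarrow> dist y y0 < d \<longrightarrow> (y - x) \<bullet> (x - q) > 0"
proof -
  define f0 where "f0 = (y0 - x0) \<bullet> (x0 - q)"
  define K where "K = 2 * (norm (x0 - q) + 1) + norm (y0 - x0) + 1"
  have K: "K > 0" by (simp add: K_def add_pos_nonneg)
  define d where "d = min 1 (f0 / (2 * K))"
  have d: "d > 0" "d \<le> 1" "d * K < f0" using K assms f0_def by (auto simp: d_def min_def field_simps)
  show ?thesis
  proof (intro exI[of _ d] conjI allI impI d(1))
    fix x y assume x: "dist x x0 < d" and y: "dist y y0 < d"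
    have "(y - x) \<bullet> (x - q) - f0 = ((y - y0) - (x - x0)) \<bullet> (x - q) + (y0 - x0) \<bullet> (x - x0)"
      unfolding f0_def by (simp add: inner_diff_left inner_diff_right algebra_simps)
    also have "\<dots> \<ge> - (norm ((y - y0) - (x - x0)) * norm (x - q)) - norm (y0 - x0) * norm (x - x0)"
      using Cauchy_Schwarz_ineq2[of "(y - y0) - (x - x0)" "x - q"] Cauchy_Schwarz_ineq2[of "y0 - x0" "x - x0"]
      by linarith
    finally have lower: "(y - x) \<bullet> (x - q) - f0 \<ge>
        - (norm ((y - y0) - (x - x0)) * norm (x - q)) - norm (y0 - x0) * norm (x - x0)" .
    have "norm ((y - y0) - (x - x0)) \<le> 2 * d"
      using norm_triangle_ineq4[of "y - y0" "x - x0"] x y by (simp add: dist_norm)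
    moreover have "norm (x - q) \<le> norm (x0 - q) + 1"
      using norm_triangle_ineq[of "x - x0" "x0 - q"] x d by (simp add: dist_norm)
    ultimately have "norm ((y - y0) - (x - x0)) * norm (x - q) \<le> (2 * d) * (norm (x0 - q) + 1)"
      using d by (intro mult_mono) auto
    moreover have "norm (y0 - x0) * norm (x - x0) \<le> norm (y0 - x0) * d"
      using x by (intro mult_left_mono) (auto simp: dist_norm)
    moreover have "(2 * d) * (norm (x0 - q) + 1) + norm (y0 - x0) * d \<le> d * K"
      unfolding K_def using d by (simp add: algebra_simps)
    ultimately show "(y - x) \<bullet> (x - q) > 0" using lower d by linarith
  qed
qed

lemma norm_normalized_diff_le:
  fixes x y :: complex
  assumes "x \<noteq> 0" "y \<noteq> 0"
  shows "cmod (x / cmod x - y / cmod y) \<le> 2 * cmod (x - y) / cmod y"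
proof -
  have "x / cmod x - y / cmod y = (x / cmod x - x / cmod y) + (x - y) / cmod y"
    by (simp add: diff_divide_distrib)
  then have "cmod (x / cmod x - y / cmod y) \<le> cmod (x / cmod x - x / cmod y) + cmod ((x - y) / cmod y)"
    by (metis norm_triangle_ineq)
  moreover have "cmod (x / cmod x - x / cmod y) = \<bar>cmod y - cmod x\<bar> / cmod y"
  proof -
    have "x / cmod x - x / cmod y = x * complex_of_real ((cmod y - cmod x) / (cmod x * cmod y))"
      using assms by (simp add: field_simps)
    then have "cmod (x / cmod x - x / cmod y) = cmod x * \<bar>(cmod y - cmod x) / (cmod x * cmod y)\<bar>"
      by (simp only: norm_mult norm_of_real)
    also have "\<dots> = \<bar>cmod y - cmod x\<bar> / cmod y" using assms by (simp add: abs_divide abs_mult)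
    finally show ?thesis .
  qed
  moreover have "\<bar>cmod y - cmod x\<bar> \<le> cmod (x - y)" by (metis norm_triangle_ineq3 norm_minus_commute)
  moreover have "cmod ((x - y) / cmod y) = cmod (x - y) / cmod y" by (simp add: norm_divide)
  ultimately have "cmod (x / cmod x - y / cmod y) \<le> (\<bar>cmod y - cmod x\<bar> + cmod (x - y)) / cmod y"
    by (simp add: add_divide_distrib)
  also have "\<dots> \<le> (2 * cmod (x - y)) / cmod y"
    using \<open>\<bar>cmod y - cmod x\<bar> \<le> cmod (x - y)\<close> by (intro divide_right_mono) auto
  finally show ?thesis by simp
qed

lemma specular_back_parallel:
  assumes "specular n u (- u)"
  shows "\<exists>\<mu>. u = \<mu> *\<^sub>R n"
proof -
  obtain s where s: "s > 0" "- u = s *\<^sub>R (u - (2 * (u \<bullet> n) / (n \<bullet> n)) *\<^sub>R n)"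
    using assms unfolding specular_def by blast
  then have eq: "(1 + s) *\<^sub>R u = (s * (2 * (u \<bullet> n) / (n \<bullet> n))) *\<^sub>R n"
    by (simp add: algebra_simps)
  have "u = (1 / (1 + s)) *\<^sub>R ((1 + s) *\<^sub>R u)" using s(1) by simp
  also have "\<dots> = (s * (2 * (u \<bullet> n) / (n \<bullet> n)) / (1 + s)) *\<^sub>R n" unfolding eq by simp
  finally show ?thesis by blast
qed

lemma reflection_unit_normal:
  fixes n A :: complex
  assumes n: "cmod n = 1" and rh: "rh > 0"
  shows "- A - (2 * ((- A) \<bullet> (rh *\<^sub>R n)) / ((rh *\<^sub>R n) \<bullet> (rh *\<^sub>R n))) *\<^sub>R (rh *\<^sub>R n) = n * n * cnj A"
proof -
  have nn: "(Re n)\<^sup>2 + (Im n)\<^sup>2 = 1" using n cmod_power2[of n] by simp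
  have "(rh *\<^sub>R n) \<bullet> (rh *\<^sub>R n) = rh\<^sup>2"
    using n by (simp add: power2_norm_eq_inner[symmetric] power_mult_distrib)
  then have "(2 * ((- A) \<bullet> (rh *\<^sub>R n)) / ((rh *\<^sub>R n) \<bullet> (rh *\<^sub>R n))) *\<^sub>R (rh *\<^sub>R n) = (- 2 * (A \<bullet> n)) *\<^sub>R n"
    using rh by (simp add: power2_eq_square field_simps)
  moreover have "- A + (2 * (A \<bullet> n)) *\<^sub>R n = n * n * cnj A"
  proof (rule complex_eqI)
    have "Re (- A + (2 * (A \<bullet> n)) *\<^sub>R n) - Re (n * n * cnj A) = Re A * ((Re n)\<^sup>2 + (Im n)\<^sup>2 - 1)"
      by (simp add: inner_complex_def algebra_simps power2_eq_square)
    then show "Re (- A + (2 * (A \<bullet> n)) *\<^sub>R n) = Re (n * n * cnj A)" using nn by simp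
    have "Im (- A + (2 * (A \<bullet> n)) *\<^sub>R n) - Im (n * n * cnj A) = Im A * ((Re n)\<^sup>2 + (Im n)\<^sup>2 - 1)"
      by (simp add: inner_complex_def algebra_simps power2_eq_square)
    then show "Im (- A + (2 * (A \<bullet> n)) *\<^sub>R n) = Im (n * n * cnj A)" using nn by simp
  qed
  moreover have "n \<bullet> n = 1" using n power2_norm_eq_inner[of n] by simp
  ultimately show ?thesis using rh by simp
qed

text \<open>Equal angles: the sines of the angles that A and B make with the unit normal n cancel.\<close>

lemma specular_of_equal_angles:
  fixes n A B :: complex
  assumes n: "cmod n = 1" and rh: "rh > 0"
    and A: "A \<bullet> n > 0" and B: "B \<bullet> n > 0"
    and angles: "Im (cnj n * B) / cmod B + Im (cnj n * A) / cmod A = 0"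
  shows "specular (rh *\<^sub>R n) (- A) B"
proof -
  have A0: "A \<noteq> 0" and B0: "B \<noteq> 0" using A B by auto
  define \<alpha> where "\<alpha> = cnj n * A / cmod A"
  define \<beta> where "\<beta> = cnj n * B / cmod B"
  have "cmod \<alpha> = 1" "cmod \<beta> = 1" using n A0 B0 by (auto simp: \<alpha>_def \<beta>_def norm_mult norm_divide)
  then have unit: "(Re \<alpha>)\<^sup>2 + (Im \<alpha>)\<^sup>2 = 1" "(Re \<beta>)\<^sup>2 + (Im \<beta>)\<^sup>2 = 1"
    using cmod_power2[of \<alpha>] cmod_power2[of \<beta>] by simp_all
  have "Re \<alpha> > 0" "Re \<beta> > 0"
    using A B A0 B0 by (auto simp: \<alpha>_def \<beta>_def Re_divide_of_real inner_complex_def algebra_simps)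
  moreover have "Im \<beta> = - Im \<alpha>" using angles A0 B0 by (simp add: \<alpha>_def \<beta>_def Im_divide_of_real)
  moreover have "(Re \<beta>)\<^sup>2 = (Re \<alpha>)\<^sup>2" using unit calculation(3) by simp
  ultimately have "Re \<beta> = Re \<alpha>" by (auto simp: power2_eq_iff)
  then have conj: "\<beta> = cnj \<alpha>" using \<open>Im \<beta> = - Im \<alpha>\<close> by (simp add: complex_eq_iff)
  have "n * cnj n = 1" using complex_norm_square[of n] n by simp
  then have "B = complex_of_real (cmod B) * (n * \<beta>)"
    using B0 by (simp add: \<beta>_def field_simps)
  also have "\<dots> = (cmod B / cmod A) *\<^sub>R (n * n * cnj A)"
    unfolding conj \<alpha>_def by (simp add: scaleR_conv_of_real field_simps)
  finally have "B = (cmod B / cmod A) *\<^sub>R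
      (- A - (2 * ((- A) \<bullet> (rh *\<^sub>R n)) / ((rh *\<^sub>R n) \<bullet> (rh *\<^sub>R n))) *\<^sub>R (rh *\<^sub>R n))"
    using reflection_unit_normal[OF n rh] by simp
  moreover have "cmod B / cmod A > 0" using A0 B0 by simp
  ultimately show ?thesis unfolding specular_def by blast
qed

lemma closed_segment_near:
  fixes x y x0 y0 z' :: "'a::real_normed_vector"
  assumes "z' \<in> closed_segment x y" "dist x x0 < d" "dist y y0 < d"
  shows "\<exists>z\<in>closed_segment x0 y0. dist z z' < d"
proof -
  obtain u where u: "0 \<le> u" "u \<le> 1" "z' = (1 - u) *\<^sub>R x + u *\<^sub>R y"
    using assms(1) unfolding in_segment(1) by blast
  define z where "z = (1 - u) *\<^sub>R x0 + u *\<^sub>R y0"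
  have "z \<in> closed_segment x0 y0" unfolding in_segment(1) z_def using u by blast
  moreover have "norm (z' - z) \<le> (1 - u) * norm (x - x0) + u * norm (y - y0)"
  proof -
    have "z' - z = (1 - u) *\<^sub>R (x - x0) + u *\<^sub>R (y - y0)"
      unfolding u(3) z_def by (simp add: algebra_simps)
    then show ?thesis using u norm_triangle_ineq[of "(1 - u) *\<^sub>R (x - x0)" "u *\<^sub>R (y - y0)"] by simp
  qed
  moreover have "(1 - u) * norm (x - x0) + u * norm (y - y0) < (1 - u) * d + u * d"
  proof (cases "u = 0")
    case False
    then have "u * norm (y - y0) < u * d" using u assms(3) by (simp add: dist_norm)
    moreover have "(1 - u) * norm (x - x0) \<le> (1 - u) * d"
      using u assms(2) by (intro mult_left_mono) (auto simp: dist_norm)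
    ultimately show ?thesis by linarith
  qed (use assms(2) in \<open>simp add: dist_norm\<close>)
  ultimately show ?thesis by (intro bexI[of _ z]) (auto simp: dist_norm norm_minus_commute algebra_simps)
qed

lemma diff_on_ray:
  fixes p q \<eta> :: "'a::real_vector"
  assumes "\<eta> - q = (1 + s) *\<^sub>R (p - q)" "s > 0"
  shows "p - \<eta> = (s / (1 + s)) *\<^sub>R (q - \<eta>)"
proof -
  have "p - q = (1 / (1 + s)) *\<^sub>R (\<eta> - q)" using assms by simp
  then have "p - \<eta> = (1 / (1 + s) - 1) *\<^sub>R (\<eta> - q)" by (simp add: algebra_simps)
  also have "1 / (1 + s) - 1 = - (s / (1 + s))" using assms(2) by (simp add: field_simps)
  finally show ?thesis by (simp add: algebra_simps)
qed

lemma open_segment_outside_cball_inner_nonneg: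
  fixes x p q :: "'a::real_inner"
  assumes x: "dist q x = R" and avoid: "open_segment x p \<inter> cball q R = {}"
  shows "(p - x) \<bullet> (x - q) \<ge> 0"
proof (rule ccontr)
  assume "\<not> ?thesis"
  then obtain t where t: "0 < t" "t < 1" "norm (x + t *\<^sub>R (p - x) - q) < norm (x - q)"
    using inward_step_enters_ball[of "p - x" x q] by auto
  then have "p \<noteq> x" by auto
  moreover have "x + t *\<^sub>R (p - x) = (1 - t) *\<^sub>R x + t *\<^sub>R p" by (simp add: algebra_simps)
  ultimately have "x + t *\<^sub>R (p - x) \<in> open_segment x p" using t unfolding in_segment(2) by auto
  moreover have "x + t *\<^sub>R (p - x) \<in> cball q R" using t(3) x by (simp add: dist_norm norm_minus_commute)
  ultimately show False using avoid by blast
qed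

lemma param_close_if_cis_close:
  assumes e: "0 < e" "e \<le> pi" and far: "\<bar>t1 - t0\<bar> \<le> 2 * pi - e"
    and close: "cmod (cis t1 - cis t0) < sqrt (2 - 2 * cos e)"
  shows "\<bar>t1 - t0\<bar> < e"
proof (rule ccontr)
  assume not_close: "\<not> \<bar>t1 - t0\<bar> < e"
  have "cos \<bar>t1 - t0\<bar> \<le> cos e"
  proof (cases "\<bar>t1 - t0\<bar> \<le> pi")
    case True then show ?thesis using e not_close by (intro cos_monotone_0_pi_le) auto
  next
    case False
    have "cos \<bar>t1 - t0\<bar> = cos (2 * pi - \<bar>t1 - t0\<bar>)" by simp
    also have "\<dots> \<le> cos e" using e far False by (intro cos_monotone_0_pi_le) auto
    finally show ?thesis .
  qed
  then have "2 - 2 * cos e \<le> (cmod (cis t1 - cis t0))\<^sup>2"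
    unfolding norm_cis_diff_power2 by simp
  moreover have "(cmod (cis t1 - cis t0))\<^sup>2 < (sqrt (2 - 2 * cos e))\<^sup>2"
    using close by (intro power_strict_mono) auto
  moreover have "(sqrt (2 - 2 * cos e))\<^sup>2 = 2 - 2 * cos e" using cos_le_one[of e] by simp
  ultimately show False by simp
qed

lemma cis_param_close:
  assumes "\<beta> < \<alpha> + 2 * pi" "e > 0"
  obtains d where "d > 0"
    "\<And>t0 t1. t0 \<in> {\<alpha>..\<beta>} \<Longrightarrow> t1 \<in> {\<alpha>..\<beta>} \<Longrightarrow> cmod (cis t1 - cis t0) < d \<Longrightarrow> \<bar>t1 - t0\<bar> < e"
proof -
  define \<epsilon> where "\<epsilon> = min (min pi (2 * pi - (\<beta> - \<alpha>))) e"
  have \<epsilon>: "0 < \<epsilon>" "\<epsilon> \<le> pi" "\<epsilon> \<le> 2 * pi - (\<beta> - \<alpha>)" "\<epsilon> \<le> e"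
    using assms by (auto simp: \<epsilon>_def)
  have "cos \<epsilon> < 1" using cos_monotone_0_pi[of 0 \<epsilon>] \<epsilon> by simp
  show thesis
  proof (rule that[of "sqrt (2 - 2 * cos \<epsilon>)"])
    show "sqrt (2 - 2 * cos \<epsilon>) > 0" using \<open>cos \<epsilon> < 1\<close> by simp
    fix t0 t1 assume t: "t0 \<in> {\<alpha>..\<beta>}" "t1 \<in> {\<alpha>..\<beta>}"
      and close: "cmod (cis t1 - cis t0) < sqrt (2 - 2 * cos \<epsilon>)"
    have "\<bar>t1 - t0\<bar> \<le> 2 * pi - \<epsilon>" using t \<epsilon>(3) by auto
    then show "\<bar>t1 - t0\<bar> < e" using param_close_if_cis_close[OF \<epsilon>(1,2) _ close] \<epsilon>(4) by simp
  qed
qed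

lemma polar_on_normal_ray:
  fixes z c :: complex
  assumes s: "s > 0" and \<rho>: "\<rho> > 0" and z: "z - c = (1 + s) *\<^sub>R (complex_of_real \<rho> * cis t)"
  shows "z - c = complex_of_real (cmod (z - c)) * cis t" and "cmod (z - c) = (1 + s) * \<rho>"
    and "cis t = (z - c) / cmod (z - c)"
proof -
  define R where "R = (1 + s) * \<rho>"
  have R: "R > 0" using s \<rho> by (simp add: R_def)
  have z: "z - c = complex_of_real R * cis t" using z by (simp add: R_def scaleR_conv_of_real)
  have "cmod (z - c) = R" unfolding z norm_mult norm_of_real norm_cis using R by simp
  then show "z - c = complex_of_real (cmod (z - c)) * cis t" "cmod (z - c) = (1 + s) * \<rho>"
    "cis t = (z - c) / cmod (z - c)"
    using z R unfolding R_def[symmetric] by simp_all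
qed

lemma inner_circle_second_difference:
  fixes v :: complex and r :: real
  defines "f \<equiv> \<lambda>t. (v - r *\<^sub>R cis t) \<bullet> (r *\<^sub>R cis t)"
  shows "f (s0 + s) + f (s0 - s) = 2 * cos s * (f s0 + r\<^sup>2) - 2 * r\<^sup>2"
proof -
  have f: "f t = r * (Re v * cos t + Im v * sin t) - r\<^sup>2" for t
  proof -
    have "f t = (Re v - r * cos t) * (r * cos t) + (Im v - r * sin t) * (r * sin t)"
      by (simp add: f_def inner_complex_def)
    then show ?thesis using sin_cos_squared_add[of t] unfolding power2_eq_square by algebra
  qed
  have "Re v * cos (s0 + s) + Im v * sin (s0 + s) + (Re v * cos (s0 - s) + Im v * sin (s0 - s))
     = 2 * cos s * (Re v * cos s0 + Im v * sin s0)"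
    by (simp add: cos_add sin_add cos_diff sin_diff algebra_simps)
  then show ?thesis unfolding f by algebra
qed

text \<open>The reflection point is found by the intermediate value theorem: the function g below is the
  sum of the sines of the angles that the rays towards \<theta> and \<eta> make with the normal at P t, and it
  changes sign between the feet t0 and t1 of the normals through \<theta> and \<eta>.\<close>

lemma circle_reflection_point:
  fixes c \<theta> \<eta> :: complex and \<rho> :: real
  defines "P \<equiv> \<lambda>t. c + complex_of_real \<rho> * cis t"
  assumes \<rho>: "\<rho> > 0"
    and \<theta>: "\<theta> - c = complex_of_real (cmod (\<theta> - c)) * cis t0"
    and \<eta>: "\<eta> - c = complex_of_real (cmod (\<eta> - c)) * cis t1"
    and front: "\<And>t. t \<in> {min t0 t1..max t0 t1} \<Longrightarrow>
       (\<theta> - P t) \<bullet> (P t - c) > 0 \<and> (\<eta> - P t) \<bullet> (P t - c) > 0"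
  shows "\<exists>t\<in>{min t0 t1..max t0 t1}.
     specular (P t - c) (P t - \<theta>) (\<eta> - P t) \<and> specular (P t - c) (P t - \<eta>) (\<theta> - P t)"
proof -
  define g where "g = (\<lambda>t. Im (cnj (cis t) * (\<eta> - P t)) / cmod (\<eta> - P t)
                         + Im (cnj (cis t) * (\<theta> - P t)) / cmod (\<theta> - P t))"
  have rot: "Im (cnj (cis t) * (complex_of_real R * cis s - complex_of_real q * cis t)) = R * sin (s - t)"
    for t R s q
    by (simp add: sin_diff algebra_simps)
  have "\<eta> - P t \<noteq> 0 \<and> \<theta> - P t \<noteq> 0" if "t \<in> {min t0 t1..max t0 t1}" for t
    using front[OF that] by auto
  then have "continuous_on {min t0 t1..max t0 t1} g"
    unfolding g_def P_def by (intro continuous_intros) auto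
  moreover have "g t0 * g t1 \<le> 0"
  proof -
    have "\<eta> - P t0 = complex_of_real (cmod (\<eta> - c)) * cis t1 - complex_of_real \<rho> * cis t0"
      "\<theta> - P t0 = complex_of_real (cmod (\<theta> - c)) * cis t0 - complex_of_real \<rho> * cis t0"
      "\<theta> - P t1 = complex_of_real (cmod (\<theta> - c)) * cis t0 - complex_of_real \<rho> * cis t1"
      "\<eta> - P t1 = complex_of_real (cmod (\<eta> - c)) * cis t1 - complex_of_real \<rho> * cis t1"
      using \<theta> \<eta> by (simp_all add: P_def algebra_simps)
    then have "Im (cnj (cis t0) * (\<eta> - P t0)) = cmod (\<eta> - c) * sin (t1 - t0)"
      "Im (cnj (cis t0) * (\<theta> - P t0)) = 0"
      "Im (cnj (cis t1) * (\<theta> - P t1)) = - (cmod (\<theta> - c) * sin (t1 - t0))"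
      "Im (cnj (cis t1) * (\<eta> - P t1)) = 0"
      by (simp_all only: rot) (simp_all add: sin_diff algebra_simps)
    then have "g t0 * g t1 = - (cmod (\<eta> - c) * cmod (\<theta> - c) / (cmod (\<eta> - P t0) * cmod (\<theta> - P t1)))
        * (sin (t1 - t0))\<^sup>2"
      by (simp add: g_def power2_eq_square)
    also have "\<dots> \<le> 0" by (intro mult_nonpos_nonneg) auto
    finally show ?thesis .
  qed
  ultimately obtain t where t: "t \<in> {min t0 t1..max t0 t1}" "g t = 0"
    using IVT_product_nonpos by blast
  have n: "P t - c = \<rho> *\<^sub>R cis t" by (simp add: P_def scaleR_conv_of_real)
  have pos: "(\<theta> - P t) \<bullet> cis t > 0" "(\<eta> - P t) \<bullet> cis t > 0"
    using front[OF t(1)] \<rho> unfolding n by (simp_all add: zero_less_mult_iff)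
  have "specular (P t - c) (P t - \<theta>) (\<eta> - P t) \<and> specular (P t - c) (P t - \<eta>) (\<theta> - P t)"
    using specular_of_equal_angles[of "cis t" \<rho> "\<theta> - P t" "\<eta> - P t"]
      specular_of_equal_angles[of "cis t" \<rho> "\<eta> - P t" "\<theta> - P t"] t(2) \<rho> pos
    unfolding n g_def by (auto simp: add.commute)
  then show ?thesis using t(1) by blast
qed

lemma finite_vertical_circle_points: "finite {y. dist (Complex x y) w = R}"
proof (rule finite_subset)
  show "{y. dist (Complex x y) w = R} \<subseteq> {Im w + sqrt (R\<^sup>2 - (x - Re w)\<^sup>2), Im w - sqrt (R\<^sup>2 - (x - Re w)\<^sup>2)}"
  proof
    fix y assume "y \<in> {y. dist (Complex x y) w = R}"
    then have "R\<^sup>2 = (x - Re w)\<^sup>2 + (y - Im w)\<^sup>2" by (auto simp: dist_norm cmod_power2)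
    then have "sqrt (R\<^sup>2 - (x - Re w)\<^sup>2) = \<bar>y - Im w\<bar>" by simp
    then show "y \<in> {Im w + sqrt (R\<^sup>2 - (x - Re w)\<^sup>2), Im w - sqrt (R\<^sup>2 - (x - Re w)\<^sup>2)}"
      by (cases "y \<ge> Im w") auto
  qed
qed simp

section \<open>Admissible walks in a cell\<close>

locale billiard_cell =
  fixes L a r :: real and b :: nat and c :: "nat \<Rightarrow> complex" and rho :: "nat \<Rightarrow> real"
    and Arc :: "nat \<Rightarrow> complex set" and Gbox :: "complex set"
  assumes geom: "cell_geometry L a r b c rho Arc Gbox"
begin

abbreviation "ctr \<equiv> disk_center L"
abbreviation "dD \<equiv> sphere ctr r"
abbreviation "dG \<equiv> frontier Gbox"
abbreviation "openings \<equiv> left_opening a \<union> right_opening L a"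
abbreviation "Cor \<equiv> corners L a b Arc"

lemma L_pos: "L > 0" and a_pos: "a > 0" and r_pos: "r > 0"
  and closed_box: "closed Gbox"
  and cball_in_interior: "cball ctr r \<subseteq> interior Gbox"
  and frontier_box: "dG = openings \<union> (\<Union>k\<in>{1..b}. Arc k)"
  and segment_from_center: "z \<in> dG \<Longrightarrow> closed_segment ctr z \<inter> dG = {z}"
  using geom unfolding cell_geometry_def by blast+

lemma arc_radius_pos: "k \<in> {1..b} \<Longrightarrow> rho k > 0"
  and arc_param: "k \<in> {1..b} \<Longrightarrow> \<exists>\<alpha> \<beta>. \<alpha> < \<beta> \<and> \<beta> < \<alpha> + 2 * pi \<and>
           Arc k = (\<lambda>t. c k + complex_of_real (rho k) * cis t) ` {\<alpha>..\<beta>}"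
  and arc_dispersing: "k \<in> {1..b} \<Longrightarrow>
           \<exists>e>0. \<forall>z\<in>Gbox. (\<exists>w\<in>Arc k. dist z w < e) \<longrightarrow> rho k \<le> dist z (c k)"
  using geom unfolding cell_geometry_def by blast+

lemma dG_subset_box: "dG \<subseteq> Gbox"
  using closed_box by (simp add: frontier_subset_closed)

lemma dD_subset_interior: "dD \<subseteq> interior Gbox"
  using cball_in_interior by auto

lemma cball_disjoint_dG: "cball ctr r \<inter> dG = {}"
  using cball_in_interior by (auto simp: frontier_def)

lemma openings_subset_dG: "openings \<subseteq> dG"
  using frontier_box by auto

lemma arc_subset_dG: "k \<in> {1..b} \<Longrightarrow> Arc k \<subseteq> dG"
  using frontier_box by auto

lemma corners_subset_dG: "Cor \<subseteq> dG"
  using frontier_box by (auto simp: corners_def bpiece_def split: if_splits)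

lemma dist_arc_center: "k \<in> {1..b} \<Longrightarrow> p \<in> Arc k \<Longrightarrow> dist p (c k) = rho k"
  using arc_param[of k] arc_radius_pos[of k] by (auto simp: dist_norm norm_mult)

definition admissible_edge :: "complex \<Rightarrow> complex \<Rightarrow> bool" where
  "admissible_edge u v \<longleftrightarrow> u \<noteq> v \<and> closed_segment u v \<subseteq> cell L r Gbox \<and>
     (\<forall>z\<in>closed_segment u v. z \<notin> Cor) \<and> (\<forall>z\<in>open_segment u v. z \<notin> openings) \<and>
     (\<forall>z\<in>closed_segment u v. z \<in> dD \<longrightarrow> (v - u) \<bullet> (z - ctr) \<noteq> 0)"

definition admissible_vertex :: "complex \<Rightarrow> complex \<Rightarrow> complex \<Rightarrow> bool" where
  "admissible_vertex u v w \<longleftrightarrow> v \<in> dG \<union> dD \<and> v \<notin> openings \<and>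
     (\<forall>k. k \<in> {1..b} \<and> v \<in> Arc k \<longrightarrow> specular (v - c k) (v - u) (w - v))"

fun admissible_walk :: "complex list \<Rightarrow> bool" where
  "admissible_walk [] = False"
| "admissible_walk [u] = False"
| "admissible_walk [u, v] = admissible_edge u v"
| "admissible_walk (u # v # w # vs) =
     (admissible_edge u v \<and> admissible_vertex u v w \<and> admissible_walk (v # w # vs))"

lemma admissible_edge_reverse: "admissible_edge u v \<Longrightarrow> admissible_edge v u"
  unfolding admissible_edge_def
  by (auto simp: closed_segment_commute open_segment_commute inner_diff_left)

lemma admissible_walk_nth:
  "admissible_walk vs \<Longrightarrow> 2 \<le> length vs \<and>
     (\<forall>i. Suc i < length vs \<longrightarrow> admissible_edge (vs ! i) (vs ! Suc i)) \<and>
     (\<forall>i. 0 < i \<and> Suc i < length vs \<longrightarrow> admissible_vertex (vs ! (i - 1)) (vs ! i) (vs ! Suc i))"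
proof (induction vs rule: admissible_walk.induct)
  case (4 u v w vs)
  let ?vs = "v # w # vs"
  have IH: "\<forall>i. Suc i < length ?vs \<longrightarrow> admissible_edge (?vs ! i) (?vs ! Suc i)"
      "\<forall>i. 0 < i \<and> Suc i < length ?vs \<longrightarrow> admissible_vertex (?vs ! (i - 1)) (?vs ! i) (?vs ! Suc i)"
    and uvw: "admissible_edge u v" "admissible_vertex u v w"
    using 4 by simp_all
  have "admissible_edge ((u # ?vs) ! i) ((u # ?vs) ! Suc i)" if "Suc i < length (u # ?vs)" for i
  proof (cases i)
    case (Suc j)
    then show ?thesis using IH(1)[rule_format, of j] that by simp
  qed (use uvw in simp)
  moreover have "admissible_vertex ((u # ?vs) ! (i - 1)) ((u # ?vs) ! i) ((u # ?vs) ! Suc i)"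
    if "0 < i" "Suc i < length (u # ?vs)" for i
  proof (cases i)
    case (Suc j)
    show ?thesis
    proof (cases j)
      case (Suc l)
      then show ?thesis using IH(2)[rule_format, of j] that \<open>i = Suc j\<close> by simp
    qed (use uvw \<open>i = Suc j\<close> in simp)
  qed (use that in simp)
  ultimately show ?case by simp
qed auto

lemma admissible_walk_join:
  assumes "admissible_walk vs" "admissible_walk ws" "last vs = hd ws" "hd ws \<in> dD"
  shows "admissible_walk (vs @ tl ws) \<and> hd (vs @ tl ws) = hd vs \<and> last (vs @ tl ws) = last ws"
proof -
  have "admissible_walk (vs @ tl ws)"
    using assms
  proof (induction vs rule: admissible_walk.induct)
    case (3 u v)
    then obtain w ws' where ws: "ws = v # w # ws'"
      by (metis admissible_walk.simps(1,2) last.simps last_ConsL list.collapse list.sel(1))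
    have "admissible_vertex u v w"
      unfolding admissible_vertex_def using 3 ws cball_disjoint_dG openings_subset_dG arc_subset_dG by fastforce
    then show ?case using 3 ws by simp
  qed auto
  moreover have "2 \<le> length vs" "2 \<le> length ws"
    using admissible_walk_nth assms(1,2) by blast+
  then have "vs \<noteq> []" "tl ws \<noteq> []" by (auto simp flip: length_greater_0_conv)
  ultimately show ?thesis by (simp add: last_tl)
qed

lemma polyline_in_cell:
  assumes walk: "admissible_walk vs" and t: "t \<in> {0..1}"
  shows "polyline vs t \<in> cell L r Gbox" and "polyline vs t \<notin> Cor"
proof -
  note props = admissible_walk_nth[OF walk]
  obtain i where i: "Suc i < length vs" "polyline vs t \<in> closed_segment (vs ! i) (vs ! Suc i)"
    using polyline_in_edge[OF conjunct1[OF props] t] by blast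
  then have "admissible_edge (vs ! i) (vs ! Suc i)" using props by blast
  then show "polyline vs t \<in> cell L r Gbox" "polyline vs t \<notin> Cor"
    using i(2) unfolding admissible_edge_def by auto
qed

lemma polyline_off_openings:
  assumes walk: "admissible_walk vs" and t: "t \<in> {0<..<1}"
  shows "polyline vs t \<notin> openings"
proof -
  note props = admissible_walk_nth[OF walk]
  from polyline_inner_point[OF conjunct1[OF props] t] show ?thesis
  proof (elim disjE exE conjE)
    fix i assume "0 < i" "Suc i < length vs" "polyline vs t = vs ! i"
    then show ?thesis using props unfolding admissible_vertex_def by force
  next
    fix i u assume i: "Suc i < length vs" "0 < u" "u < 1"
      and pt: "polyline vs t = (1 - u) *\<^sub>R vs ! i + u *\<^sub>R vs ! Suc i"
    then have "polyline vs t \<in> open_segment (vs ! i) (vs ! Suc i)"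
      using props unfolding admissible_edge_def in_segment(2) by auto
    then show ?thesis using props i unfolding admissible_edge_def by blast
  qed
qed

lemma cell_admissible_polyline:
  assumes walk: "admissible_walk vs" and f: "\<forall>t\<in>{0..1}. f t = polyline vs t"
  shows "cell_admissible L a r b c Arc Gbox f"
proof -
  note props = admissible_walk_nth[OF walk]
  define ts where "ts = map (\<lambda>i. real i / real (length vs - 1)) [0..<length vs]"
  note bp = polyline_breakpoints[OF conjunct1[OF props], folded ts_def]
  have edges: "\<forall>i. Suc i < length vs \<longrightarrow> vs ! i \<noteq> vs ! Suc i \<and>
      (\<forall>t\<in>{ts ! i .. ts ! Suc i}.
         f t = vs ! i + ((t - ts ! i) / (ts ! Suc i - ts ! i)) *\<^sub>R (vs ! Suc i - vs ! i))"
  proof (intro allI impI conjI ballI)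
    fix i t assume i: "Suc i < length vs" and t: "t \<in> {ts ! i .. ts ! Suc i}"
    have "ts ! i \<in> {0..1}" "ts ! Suc i \<in> {0..1}" using bp(1,6) i by simp_all
    then have "t \<in> {0..1}" using t by auto
    then show "f t = vs ! i + ((t - ts ! i) / (ts ! Suc i - ts ! i)) *\<^sub>R (vs ! Suc i - vs ! i)"
      using bp(7) i t f by simp
  qed (use props in \<open>auto simp: admissible_edge_def\<close>)
  show ?thesis
    unfolding cell_admissible_def
  proof (intro conjI exI[of _ vs] exI[of _ ts])
    show "\<forall>t\<in>{0..1}. f t \<in> cell L r Gbox" "\<forall>t\<in>{0..1}. f t \<notin> Cor"
      using polyline_in_cell[OF walk] f by simp_all
    show "\<forall>t\<in>{0<..<1}. f t \<notin> openings" using polyline_off_openings[OF walk] f by simp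
    show "2 \<le> length vs" using props by blast
    show "length ts = length vs" "ts ! 0 = 0" "ts ! (length ts - 1) = 1"
      "\<forall>i. Suc i < length ts \<longrightarrow> ts ! i < ts ! Suc i"
      using bp(1-4) by blast+
    show "\<forall>i<length vs. f (ts ! i) = vs ! i" using f bp(1,5,6) by auto
    show "\<forall>i. 0 < i \<and> Suc i < length vs \<longrightarrow> vs ! i \<in> dG \<union> dD"
      using props unfolding admissible_vertex_def by auto
    show "\<forall>i k. 0 < i \<and> Suc i < length vs \<and> k \<in> {1..b} \<and> vs ! i \<in> Arc k \<longrightarrow>
        specular (vs ! i - c k) (vs ! i - vs ! (i - 1)) (vs ! Suc i - vs ! i)"
      using props unfolding admissible_vertex_def by blast
    show "\<forall>i. Suc i < length vs \<longrightarrow> (\<forall>z\<in>closed_segment (vs ! i) (vs ! Suc i). z \<in> dD \<longrightarrow>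
        (vs ! Suc i - vs ! i) \<bullet> (z - ctr) \<noteq> 0)"
      using props unfolding admissible_edge_def by blast
  qed (rule edges)
qed

subsection \<open>Returning rays and local reflection\<close>

lemma segment_from_arc_outward:
  assumes k: "k \<in> {1..b}" and p: "p \<in> Arc k" and x: "x \<noteq> p"
    and seg: "open_segment p x \<subseteq> Gbox" and par: "x - p = \<mu> *\<^sub>R (p - c k)"
  shows "\<mu> > 0"
proof (rule ccontr)
  assume "\<not> \<mu> > 0"
  moreover have "\<mu> \<noteq> 0" using x par by auto
  ultimately have "- \<mu> > 0" by simp
  define \<nu> where "\<nu> = - \<mu>"
  have \<nu>: "\<nu> > 0" and par: "x - p = - \<nu> *\<^sub>R (p - c k)"
    using \<open>- \<mu> > 0\<close> par by (simp_all add: \<nu>_def)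
  have \<rho>: "rho k > 0" using arc_radius_pos[OF k] .
  have n: "norm (p - c k) = rho k" using dist_arc_center[OF k p] by (simp add: dist_norm)
  obtain e where e: "e > 0" "\<forall>z\<in>Gbox. (\<exists>w\<in>Arc k. dist z w < e) \<longrightarrow> rho k \<le> dist z (c k)"
    using arc_dispersing[OF k] by blast
  define t where "t = min (1/2) (min (1 / (2 * \<nu>)) (e / (2 * \<nu> * rho k)))"
  have t: "0 < t" "t < 1" "t * \<nu> \<le> 1/2" "t * \<nu> * rho k < e"
  proof -
    show "0 < t" "t < 1" using \<nu> e \<rho> by (auto simp: t_def)
    have "t \<le> 1 / (2 * \<nu>)" by (simp add: t_def)
    then show "t * \<nu> \<le> 1/2" using \<nu> by (simp add: field_simps)
    have "t \<le> e / (2 * \<nu> * rho k)" by (simp add: t_def)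
    then have "t * (\<nu> * rho k) \<le> e / 2" using \<nu> \<rho> by (simp add: field_simps)
    then show "t * \<nu> * rho k < e" using e by (simp add: mult.assoc)
  qed
  define z where "z = p + t *\<^sub>R (x - p)"
  have "z = (1 - t) *\<^sub>R p + t *\<^sub>R x" by (simp add: z_def algebra_simps)
  then have "z \<in> open_segment p x" using t x unfolding in_segment(2) by auto
  then have "z \<in> Gbox" using seg by blast
  moreover have "dist z p < e" using t(1,4) \<nu> n by (simp add: z_def par dist_norm)
  ultimately have "rho k \<le> dist z (c k)" using e(2) p by blast
  moreover have "z - c k = (1 - t * \<nu>) *\<^sub>R (p - c k)" by (simp add: z_def par algebra_simps)
  then have "dist z (c k) = (1 - t * \<nu>) * rho k" using n t by (simp add: dist_norm)
  moreover have "t * \<nu> > 0" using t(1) \<nu> by simp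
  ultimately show False using \<rho> by (simp add: mult_le_cancel_right1)
qed

text \<open>A ray that comes back to its starting point after one specular reflection must hit the arc
  along the normal, so the starting point lies on the normal line through the reflection point.\<close>

lemma returns_via_normal:
  assumes k: "k \<in> {1..b}" and rv: "returns_via L a r b c Arc Gbox k \<eta>"
  shows "\<exists>p s. p \<in> Arc k \<and> p \<notin> Cor \<and> s > 0 \<and> \<eta> - c k = (1 + s) *\<^sub>R (p - c k) \<and>
     open_segment \<eta> p \<inter> (dG \<union> cball ctr r) = {} \<and> (p - \<eta>) \<bullet> (\<eta> - ctr) \<ge> 0"
proof -
  have \<eta>: "\<eta> \<in> dD" using rv unfolding returns_via_def by blast
  obtain p where p: "p \<in> Arc k" "p \<notin> Cor" "p \<noteq> \<eta>"
     "open_segment \<eta> p \<inter> (dG \<union> cball ctr r) = {}" "specular (p - c k) (p - \<eta>) (\<eta> - p)"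
    using rv unfolding returns_via_def by blast
  have "specular (p - c k) (p - \<eta>) (- (p - \<eta>))" using p(5) by simp
  then obtain \<mu> where \<mu>: "p - \<eta> = \<mu> *\<^sub>R (p - c k)"
    using specular_back_parallel by blast
  have "open_segment \<eta> p \<subseteq> interior Gbox"
    by (rule open_segment_subset_interior) (use dD_subset_interior \<eta> p(4) in auto)
  then have "open_segment p \<eta> \<subseteq> Gbox"
    using interior_subset by (auto simp: open_segment_commute)
  moreover have "\<eta> - p = (- \<mu>) *\<^sub>R (p - c k)" using \<mu> by (simp add: algebra_simps)
  ultimately have "- \<mu> > 0"
    using p(3) by (intro segment_from_arc_outward[OF k p(1), of \<eta> "- \<mu>"]) auto
  moreover have "\<eta> - c k = (1 + - \<mu>) *\<^sub>R (p - c k)" using \<mu> by (simp add: algebra_simps)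
  moreover have "(p - \<eta>) \<bullet> (\<eta> - ctr) \<ge> 0"
  proof (rule open_segment_outside_cball_inner_nonneg)
    show "dist ctr \<eta> = r" using \<eta> by simp
    show "open_segment \<eta> p \<inter> cball ctr r = {}" using p(4) by blast
  qed
  ultimately show ?thesis using p(1,2,4) by (intro exI[of _ p] exI[of _ "- \<mu>"]) simp
qed

lemma returns_via_inner_nonneg:
  assumes k: "k \<in> {1..b}" and rv: "returns_via L a r b c Arc Gbox k \<eta>"
  shows "(c k - \<eta>) \<bullet> (\<eta> - ctr) \<ge> 0"
proof -
  obtain p s where p: "s > 0" "\<eta> - c k = (1 + s) *\<^sub>R (p - c k)" "(p - \<eta>) \<bullet> (\<eta> - ctr) \<ge> 0"
    using returns_via_normal[OF k rv] by blast
  then have "(s / (1 + s)) * ((c k - \<eta>) \<bullet> (\<eta> - ctr)) \<ge> 0"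
    using diff_on_ray[OF p(2,1)] by simp
  then show ?thesis using p(1) by (simp add: zero_le_divide_iff zero_le_mult_iff)
qed

text \<open>Strictness comes from the openness of I_k: along dD the function
  t \<mapsto> (c k - \<eta>(t)) \<bullet> (\<eta>(t) - ctr) is nonnegative near \<theta>, and its second difference at \<theta> is
  strictly negative if it vanishes at \<theta>.\<close>

lemma illum_inner_pos:
  assumes k: "k \<in> {1..b}" and \<theta>: "\<theta> \<in> illum L a r b c Arc Gbox k"
  shows "(c k - \<theta>) \<bullet> (\<theta> - ctr) > 0"
proof (rule ccontr)
  assume not_pos: "\<not> ?thesis"
  obtain U where U: "openin (top_of_set dD) U" "\<theta> \<in> U" "\<forall>\<eta>\<in>U. returns_via L a r b c Arc Gbox k \<eta>"
    using \<theta> unfolding illum_def by blast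
  obtain e where e: "e > 0" "\<forall>\<eta>\<in>dD. dist \<eta> \<theta> < e \<longrightarrow> \<eta> \<in> U"
    using U(1,2) unfolding openin_euclidean_subtopology_iff by blast
  define f where "f = (\<lambda>t. ((c k - ctr) - r *\<^sub>R cis t) \<bullet> (r *\<^sub>R cis t))"
  define P where "P = (\<lambda>t. ctr + r *\<^sub>R cis t)"
  have f: "(c k - P t) \<bullet> (P t - ctr) = f t" for t by (simp add: P_def f_def algebra_simps)
  have P: "P t \<in> dD" for t using r_pos by (simp add: P_def dist_norm)
  define s0 where "s0 = Arg (\<theta> - ctr)"
  have "\<theta> \<in> dD" using U(1,2) openin_imp_subset by blast
  then have \<theta>_eq: "\<theta> = P s0"
    using rcis_cmod_Arg[of "\<theta> - ctr"]
    by (simp add: P_def s0_def rcis_def dist_norm norm_minus_commute scaleR_conv_of_real)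
  define s where "s = min 1 (e / (2 * r))"
  have s: "0 < s" "s \<le> 1" "r * s < e" using e r_pos by (auto simp: s_def min_def field_simps)
  have "f (s0 + d) \<ge> 0" if "\<bar>d\<bar> \<le> s" for d
  proof -
    have "dist (P (s0 + d)) \<theta> = r * cmod (cis (s0 + d) - cis s0)"
      using r_pos \<theta>_eq by (simp add: P_def dist_norm scaleR_conv_of_real norm_mult flip: right_diff_distrib)
    also have "\<dots> \<le> r * s" using norm_cis_diff_le[of "s0 + d" s0] r_pos that by (simp add: mult_left_mono)
    finally have "P (s0 + d) \<in> U" using e(2) P s by auto
    then show ?thesis using returns_via_inner_nonneg[OF k] U(3) f by metis
  qed
  from this[of s] this[of "- s"] s have "0 \<le> f (s0 + s) + f (s0 - s)" by simp
  also have "\<dots> = 2 * cos s * (f s0 + r\<^sup>2) - 2 * r\<^sup>2"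
    using inner_circle_second_difference[of "c k - ctr" r s0 s] by (simp add: f_def)
  also have "\<dots> < 0"
  proof -
    have "f s0 \<le> 0" using not_pos f \<theta>_eq by simp
    moreover have "f s0 \<ge> 0" using returns_via_inner_nonneg[OF k] U(2,3) f \<theta>_eq by metis
    moreover have "cos s < 1" using cos_monotone_0_pi[of 0 s] s pi_gt3 by simp
    ultimately show ?thesis using r_pos by simp
  qed
  finally show False by simp
qed

lemma arc_not_corner:
  assumes k: "k \<in> {1..b}" and p: "p \<in> Arc k" "p \<notin> Cor"
  shows "p \<notin> openings" and "\<And>k'. k' \<in> {1..b} \<Longrightarrow> p \<in> Arc k' \<Longrightarrow> k' = k"
proof -
  have in_corners: "p \<in> Cor" if "i \<le> Suc b" "i \<noteq> k" "p \<in> bpiece L a b Arc i" for i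
    unfolding corners_def using that k p(1) by (intro CollectI exI[of _ i] exI[of _ k]) (auto simp: bpiece_def)
  show "p \<notin> openings"
    using in_corners[of 0] in_corners[of "Suc b"] k p(2) by (auto simp: bpiece_def)
  show "k' = k" if "k' \<in> {1..b}" "p \<in> Arc k'" for k'
    using in_corners[of k'] that p(2) by (auto simp: bpiece_def)
qed

lemma corner_cases:
  assumes "p \<in> Cor"
  shows "(\<exists>k\<in>{1..b}. p \<in> Arc k) \<or> (p \<in> left_opening a \<and> p \<in> right_opening L a)"
proof -
  obtain i j where ij: "i \<le> Suc b" "j \<le> Suc b" "i \<noteq> j" "p \<in> bpiece L a b Arc i" "p \<in> bpiece L a b Arc j"
    using assms unfolding corners_def by blast
  show ?thesis
  proof (cases "i \<in> {1..b} \<or> j \<in> {1..b}")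
    case True then show ?thesis using ij by (auto simp: bpiece_def split: if_splits)
  next
    case False
    then have "(i = 0 \<and> j = Suc b) \<or> (i = Suc b \<and> j = 0)" using ij by auto
    then show ?thesis using ij by (auto simp: bpiece_def)
  qed
qed

lemma closed_left_opening: "closed (left_opening a)"
proof -
  have "left_opening a = (\<lambda>y. \<i> * complex_of_real y) ` {-a..a}"
    unfolding left_opening_def by (auto simp: complex_eq_iff image_def)
  then show ?thesis by (simp only:) (intro compact_imp_closed compact_continuous_image continuous_intros, auto)
qed

lemma closed_right_opening: "closed (right_opening L a)"
proof -
  have "right_opening L a = (\<lambda>y. complex_of_real L + \<i> * complex_of_real y) ` {-a..a}"
    unfolding right_opening_def by (auto simp: complex_eq_iff image_def)
  then show ?thesis by (simp only:) (intro compact_imp_closed compact_continuous_image continuous_intros, auto)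
qed

lemma closed_arc: "k \<in> {1..b} \<Longrightarrow> closed (Arc k)"
proof -
  assume "k \<in> {1..b}"
  then obtain \<alpha> \<beta> where "Arc k = (\<lambda>t. c k + complex_of_real (rho k) * cis t) ` {\<alpha>..\<beta>}"
    using arc_param by blast
  then show ?thesis by (simp only:) (intro compact_imp_closed compact_continuous_image continuous_intros, auto)
qed

lemma closed_corners: "closed Cor"
proof -
  have "Cor = (\<Union>i\<in>{..Suc b}. \<Union>j\<in>{..Suc b} - {i}. bpiece L a b Arc i \<inter> bpiece L a b Arc j)"
    unfolding corners_def by auto
  moreover have "closed (bpiece L a b Arc i)" if "i \<le> Suc b" for i
    using that closed_left_opening closed_right_opening closed_arc by (auto simp: bpiece_def)
  ultimately show ?thesis by (auto intro!: closed_UN closed_Int)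
qed

definition other_pieces :: "nat \<Rightarrow> complex set" where
  "other_pieces k = openings \<union> (\<Union>k'\<in>{1..b} - {k}. Arc k')"

lemma closed_other_pieces: "closed (other_pieces k)"
  unfolding other_pieces_def
  using closed_left_opening closed_right_opening closed_arc by (auto intro!: closed_UN closed_Un)

lemma dG_subset_other_pieces: "dG \<subseteq> other_pieces k \<union> Arc k"
  using frontier_box unfolding other_pieces_def by auto

lemma other_pieces_subset_dG: "k \<in> {1..b} \<Longrightarrow> other_pieces k \<subseteq> dG"
  using frontier_box unfolding other_pieces_def by auto

lemma arc_not_other_pieces: "k \<in> {1..b} \<Longrightarrow> p \<in> Arc k \<Longrightarrow> p \<notin> Cor \<Longrightarrow> p \<notin> other_pieces k"
  using arc_not_corner unfolding other_pieces_def by blast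

lemma admissible_edges_from_dD:
  assumes x: "x \<in> dD" and y: "y \<in> dG" "y \<notin> Cor"
    and out: "(y - x) \<bullet> (x - ctr) > 0" and avoid: "open_segment x y \<inter> dG = {}"
  shows "admissible_edge x y \<and> admissible_edge y x"
proof -
  have y_out: "y \<notin> cball ctr r" using y(1) cball_disjoint_dG by auto
  have x_in: "x \<notin> dG" using x cball_disjoint_dG by auto
  have inner: "z \<notin> cball ctr r \<and> z \<notin> dG" if z: "z \<in> open_segment x y" for z
  proof -
    obtain u where u: "0 < u" "u < 1" "z = (1 - u) *\<^sub>R x + u *\<^sub>R y"
      using z unfolding in_segment(2) by blast
    have "z = x + u *\<^sub>R (y - x)" using u by (simp add: algebra_simps)
    moreover have "norm (x - ctr) = r" using x by (simp add: dist_norm norm_minus_commute)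
    ultimately have "norm (z - ctr) > r" using outward_step_leaves_sphere[OF _ out u(1)] by blast
    then have "z \<notin> cball ctr r" by (simp add: dist_norm norm_minus_commute)
    then show ?thesis using avoid z by blast
  qed
  have interior: "open_segment x y \<subseteq> interior Gbox"
    using open_segment_subset_interior[OF _ avoid] x dD_subset_interior by blast
  have cell: "closed_segment x y \<subseteq> cell L r Gbox"
  proof
    fix z assume "z \<in> closed_segment x y"
    then consider "z \<in> open_segment x y" | "z = x" | "z = y" unfolding closed_segment_eq_open by blast
    then show "z \<in> cell L r Gbox"
    proof cases
      case 1 then show ?thesis using inner interior interior_subset unfolding cell_def by fastforce
    next
      case 2 then show ?thesis using x dD_subset_interior interior_subset unfolding cell_def by fastforce
    next
      case 3 then show ?thesis using y(1) dG_subset_box y_out unfolding cell_def by fastforce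
    qed
  qed
  have "\<forall>z\<in>closed_segment x y. z \<notin> Cor"
    unfolding closed_segment_eq_open using inner x_in y(2) corners_subset_dG by blast
  moreover have "\<forall>z\<in>open_segment x y. z \<notin> openings" using inner openings_subset_dG by blast
  moreover have "\<forall>z\<in>closed_segment x y. z \<in> dD \<longrightarrow> (y - x) \<bullet> (z - ctr) \<noteq> 0"
  proof (intro ballI impI)
    fix z assume z: "z \<in> closed_segment x y" "z \<in> dD"
    have "z = x" using z inner y_out unfolding closed_segment_eq_open by fastforce
    then show "(y - x) \<bullet> (z - ctr) \<noteq> 0" using out by simp
  qed
  moreover have "x \<noteq> y" using x_in y(1) by auto
  ultimately have "admissible_edge x y" using cell unfolding admissible_edge_def by blast
  then show ?thesis using admissible_edge_reverse by blast
qed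

lemma arc_chord_avoids_dG:
  assumes k: "k \<in> {1..b}" and y: "y \<in> Arc k" and out: "(x - y) \<bullet> (y - c k) > 0"
    and sep: "closed_segment x y \<inter> other_pieces k = {}"
  shows "open_segment x y \<inter> dG = {}"
proof -
  have "z \<notin> dG" if z: "z \<in> open_segment x y" for z
  proof -
    obtain u where u: "u < 1" "z = (1 - u) *\<^sub>R x + u *\<^sub>R y" using z unfolding in_segment(2) by blast
    have "norm (y - c k) = rho k" using dist_arc_center[OF k y] by (simp add: dist_norm)
    then have "norm (y + (1 - u) *\<^sub>R (x - y) - c k) > rho k"
      by (rule outward_step_leaves_sphere[OF _ out]) (use u in simp)
    moreover have "z = y + (1 - u) *\<^sub>R (x - y)" using u by (simp add: algebra_simps)
    ultimately have "z \<notin> Arc k" using dist_arc_center[OF k] by (force simp: dist_norm)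
    moreover have "z \<notin> other_pieces k" using sep z segment_open_subset_closed by blast
    ultimately show ?thesis using dG_subset_other_pieces by blast
  qed
  then show ?thesis by blast
qed

text \<open>All the conditions that make the chord from \<theta> to the reflection point p0 admissible are open.\<close>

lemma returning_chords_near:
  assumes k: "k \<in> {1..b}" and \<theta>: "\<theta> \<in> illum L a r b c Arc Gbox k"
  obtains p0 s0 \<delta> where "p0 \<in> Arc k" "s0 > 0" "\<theta> - c k = (1 + s0) *\<^sub>R (p0 - c k)" "\<delta> > 0"
    "\<And>x y. x \<in> dD \<Longrightarrow> y \<in> Arc k \<Longrightarrow> dist x \<theta> < \<delta> \<Longrightarrow> dist y p0 < \<delta> \<Longrightarrow>
       admissible_edge x y \<and> admissible_edge y x \<and> (x - y) \<bullet> (y - c k) > 0 \<and> y \<notin> Cor"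
proof -
  have rv: "returns_via L a r b c Arc Gbox k \<theta>" using \<theta> unfolding illum_def by blast
  then have \<theta>_dD: "\<theta> \<in> dD" unfolding returns_via_def by blast
  obtain p0 s0 where p0: "p0 \<in> Arc k" "p0 \<notin> Cor" "s0 > 0" "\<theta> - c k = (1 + s0) *\<^sub>R (p0 - c k)"
     "open_segment \<theta> p0 \<inter> (dG \<union> cball ctr r) = {}"
    using returns_via_normal[OF k rv] by blast
  have "(p0 - \<theta>) \<bullet> (\<theta> - ctr) = (s0 / (1 + s0)) * ((c k - \<theta>) \<bullet> (\<theta> - ctr))"
    using diff_on_ray[OF p0(4,3)] by simp
  then have A0: "(p0 - \<theta>) \<bullet> (\<theta> - ctr) > 0" using illum_inner_pos[OF k \<theta>] p0(3) by simp
  have "norm (p0 - c k) = rho k" using dist_arc_center[OF k p0(1)] by (simp add: dist_norm)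
  moreover have "\<theta> - p0 = s0 *\<^sub>R (p0 - c k)" using p0(4) by (simp add: algebra_simps)
  ultimately have B0: "(\<theta> - p0) \<bullet> (p0 - c k) > 0"
    using p0(3) arc_radius_pos[OF k] by (simp add: power2_norm_eq_inner[symmetric])
  have "\<theta> \<notin> other_pieces k" using \<theta>_dD cball_disjoint_dG other_pieces_subset_dG[OF k] by auto
  moreover have "p0 \<notin> other_pieces k" using arc_not_other_pieces[OF k p0(1,2)] .
  moreover have "open_segment \<theta> p0 \<inter> other_pieces k = {}" using p0(5) other_pieces_subset_dG[OF k] by blast
  ultimately have "closed_segment \<theta> p0 \<inter> other_pieces k = {}" unfolding closed_segment_eq_open by blast
  then obtain d1 where d1: "d1 > 0" "\<forall>x\<in>closed_segment \<theta> p0. \<forall>y\<in>other_pieces k. d1 \<le> dist x y"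
    using separate_compact_closed[OF compact_segment closed_other_pieces] by blast
  obtain d2 where d2: "d2 > 0" "ball p0 d2 \<subseteq> - Cor"
    using closed_corners p0(2) open_contains_ball[of "- Cor"] by (auto simp: open_Compl)
  obtain d3 where d3: "d3 > 0" "\<forall>x y. dist x \<theta> < d3 \<longrightarrow> dist y p0 < d3 \<longrightarrow> (y - x) \<bullet> (x - ctr) > 0"
    using inner_pos_near[OF A0] by blast
  obtain d4 where d4: "d4 > 0" "\<forall>y x. dist y p0 < d4 \<longrightarrow> dist x \<theta> < d4 \<longrightarrow> (x - y) \<bullet> (y - c k) > 0"
    using inner_pos_near[OF B0] by blast
  define \<delta> where "\<delta> = min (min d1 d2) (min d3 d4)"
  have \<delta>: "\<delta> > 0" "\<delta> \<le> d1" "\<delta> \<le> d2" "\<delta> \<le> d3" "\<delta> \<le> d4" using d1 d2 d3 d4 by (auto simp: \<delta>_def)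
  show thesis
  proof (rule that[OF p0(1,3,4) \<delta>(1)])
    fix x y assume x: "x \<in> dD" and y: "y \<in> Arc k" and dx: "dist x \<theta> < \<delta>" and dy: "dist y p0 < \<delta>"
    have "y \<in> ball p0 d2" using dy \<delta> by (simp add: dist_commute)
    then have y_Cor: "y \<notin> Cor" using d2 by blast
    have A: "(y - x) \<bullet> (x - ctr) > 0" using d3 dx dy \<delta> by auto
    have B: "(x - y) \<bullet> (y - c k) > 0" using d4 dx dy \<delta> by auto
    have "closed_segment x y \<inter> other_pieces k = {}"
    proof (rule ccontr)
      assume "closed_segment x y \<inter> other_pieces k \<noteq> {}"
      then obtain z' where z': "z' \<in> closed_segment x y" "z' \<in> other_pieces k" by blast
      obtain z where z: "z \<in> closed_segment \<theta> p0" "dist z z' < \<delta>"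
        using closed_segment_near[OF z'(1) dx dy] by blast
      then have "d1 \<le> dist z z'" using d1(2) z'(2) by blast
      then show False using z(2) \<delta>(2) by linarith
    qed
    then have "open_segment x y \<inter> dG = {}" by (rule arc_chord_avoids_dG[OF k y B])
    moreover have "y \<in> dG" using arc_subset_dG[OF k] y by blast
    ultimately show "admissible_edge x y \<and> admissible_edge y x \<and> (x - y) \<bullet> (y - c k) > 0 \<and> y \<notin> Cor"
      using admissible_edges_from_dD[OF x _ y_Cor A] B y_Cor by blast
  qed
qed

lemma admissible_walks_via_reflection:
  assumes k: "k \<in> {1..b}" and p: "p \<in> Arc k" "p \<notin> Cor"
    and edges: "admissible_edge \<theta> p" "admissible_edge p \<theta>" "admissible_edge \<eta> p" "admissible_edge p \<eta>"
    and refl: "specular (p - c k) (p - \<theta>) (\<eta> - p)" "specular (p - c k) (p - \<eta>) (\<theta> - p)"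
  shows "admissible_walk [\<theta>, p, \<eta>] \<and> admissible_walk [\<eta>, p, \<theta>]"
proof -
  have "admissible_vertex \<theta> p \<eta>" "admissible_vertex \<eta> p \<theta>"
    unfolding admissible_vertex_def using p refl arc_subset_dG[OF k] arc_not_corner[OF k p] by blast+
  then show ?thesis using edges by simp
qed

text \<open>Points of dD near \<theta> return via points of the arc near p0, and between the two feet of the
  normals lies a point of the arc reflecting one point into the other.\<close>

lemma local_reflection:
  assumes k: "k \<in> {1..b}" and \<theta>: "\<theta> \<in> illum L a r b c Arc Gbox k"
  shows "\<exists>\<delta>>0. \<forall>\<eta>\<in>dD. dist \<eta> \<theta> < \<delta> \<longrightarrow> (\<exists>p. admissible_walk [\<theta>, p, \<eta>] \<and> admissible_walk [\<eta>, p, \<theta>])"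
proof -
  obtain U where U: "openin (top_of_set dD) U" "\<theta> \<in> U" "\<forall>\<eta>\<in>U. returns_via L a r b c Arc Gbox k \<eta>"
    using \<theta> unfolding illum_def by blast
  obtain eU where eU: "eU > 0" "\<forall>\<eta>\<in>dD. dist \<eta> \<theta> < eU \<longrightarrow> \<eta> \<in> U"
    using U(1,2) unfolding openin_euclidean_subtopology_iff by blast
  have \<theta>_dD: "\<theta> \<in> dD" using U(1,2) openin_imp_subset by blast
  have \<rho>: "rho k > 0" using arc_radius_pos[OF k] .
  obtain p0 s0 \<delta>1 where p0: "p0 \<in> Arc k" "s0 > 0" "\<theta> - c k = (1 + s0) *\<^sub>R (p0 - c k)" "\<delta>1 > 0"
    and chords: "\<And>x y. x \<in> dD \<Longrightarrow> y \<in> Arc k \<Longrightarrow> dist x \<theta> < \<delta>1 \<Longrightarrow> dist y p0 < \<delta>1 \<Longrightarrow>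
       admissible_edge x y \<and> admissible_edge y x \<and> (x - y) \<bullet> (y - c k) > 0 \<and> y \<notin> Cor"
    using returning_chords_near[OF k \<theta>] by blast
  obtain \<alpha> \<beta> where ab: "\<beta> < \<alpha> + 2 * pi" "Arc k = (\<lambda>t. c k + complex_of_real (rho k) * cis t) ` {\<alpha>..\<beta>}"
    using arc_param[OF k] by blast
  define P where "P = (\<lambda>t. c k + complex_of_real (rho k) * cis t)"
  have P_arc: "P t \<in> Arc k" if "t \<in> {\<alpha>..\<beta>}" for t using that unfolding ab(2) P_def by blast
  obtain t0 where t0: "t0 \<in> {\<alpha>..\<beta>}" "p0 = P t0" using p0(1) ab(2) P_def by auto
  note \<theta>_polar = polar_on_normal_ray[OF p0(2) \<rho> p0(3)[unfolded t0(2), simplified P_def add_diff_cancel_left']]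
  have \<theta>_far: "cmod (\<theta> - c k) > 0" using \<theta>_polar(2) p0(2) \<rho> by simp
  have "\<delta>1 / rho k > 0" using \<rho> p0(4) by simp
  then obtain d where d: "d > 0"
    "\<And>t0 t1. t0 \<in> {\<alpha>..\<beta>} \<Longrightarrow> t1 \<in> {\<alpha>..\<beta>} \<Longrightarrow> cmod (cis t1 - cis t0) < d \<Longrightarrow> \<bar>t1 - t0\<bar> < \<delta>1 / rho k"
    using cis_param_close[OF ab(1)] by blast
  define \<delta> where "\<delta> = min eU (min \<delta>1 (d * cmod (\<theta> - c k) / 2))"
  have \<delta>: "\<delta> > 0" "\<delta> \<le> eU" "\<delta> \<le> \<delta>1" "2 * \<delta> / cmod (\<theta> - c k) \<le> d"
    using eU p0(4) d(1) \<theta>_far by (auto simp: \<delta>_def field_simps)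
  show ?thesis
  proof (intro exI[of _ \<delta>] conjI ballI impI \<delta>(1))
    fix \<eta> assume \<eta>: "\<eta> \<in> dD" "dist \<eta> \<theta> < \<delta>"
    then have "returns_via L a r b c Arc Gbox k \<eta>" using U(3) eU(2) \<delta>(2) by auto
    then obtain p1 s1 where p1: "p1 \<in> Arc k" "s1 > 0" "\<eta> - c k = (1 + s1) *\<^sub>R (p1 - c k)"
      using returns_via_normal[OF k] by blast
    obtain t1 where t1: "t1 \<in> {\<alpha>..\<beta>}" "p1 = P t1" using p1(1) ab(2) P_def by auto
    note \<eta>_polar = polar_on_normal_ray[OF p1(2) \<rho> p1(3)[unfolded t1(2), simplified P_def add_diff_cancel_left']]
    have "\<eta> - c k \<noteq> 0" "\<theta> - c k \<noteq> 0" using \<eta>_polar(2) p1(2) \<rho> \<theta>_far by auto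
    from norm_normalized_diff_le[OF this]
    have "cmod (cis t1 - cis t0) \<le> 2 * cmod ((\<eta> - c k) - (\<theta> - c k)) / cmod (\<theta> - c k)"
      unfolding \<theta>_polar(3) \<eta>_polar(3) .
    also have "\<dots> < 2 * \<delta> / cmod (\<theta> - c k)"
      using \<eta>(2) \<theta>_far by (simp add: dist_norm divide_strict_right_mono)
    also have "\<dots> \<le> d" by (rule \<delta>(4))
    finally have "\<bar>t1 - t0\<bar> < \<delta>1 / rho k" using d(2) t0(1) t1(1) by blast
    then have near: "P t \<in> Arc k \<and> dist (P t) p0 < \<delta>1" if "t \<in> {min t0 t1..max t0 t1}" for t
    proof -
      have "dist (P t) p0 = rho k * cmod (cis t - cis t0)"
        using t0(2) \<rho> by (simp add: P_def dist_norm norm_mult flip: right_diff_distrib)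
      also have "\<dots> \<le> rho k * \<bar>t - t0\<bar>" using norm_cis_diff_le[of t t0] \<rho> by simp
      also have "\<dots> \<le> rho k * \<bar>t1 - t0\<bar>" using that \<rho> by (intro mult_left_mono) auto
      also have "\<dots> < \<delta>1" using \<open>\<bar>t1 - t0\<bar> < \<delta>1 / rho k\<close> \<rho> by (simp add: field_simps)
      finally have "dist (P t) p0 < \<delta>1" .
      moreover have "t \<in> {\<alpha>..\<beta>}" using that t0(1) t1(1) by auto
      ultimately show ?thesis using P_arc by blast
    qed
    have close: "dist \<theta> \<theta> < \<delta>1" "dist \<eta> \<theta> < \<delta>1" using \<eta>(2) \<delta>(3) p0(4) by auto
    have "\<exists>t\<in>{min t0 t1..max t0 t1}.
        specular (P t - c k) (P t - \<theta>) (\<eta> - P t) \<and> specular (P t - c k) (P t - \<eta>) (\<theta> - P t)"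
      using circle_reflection_point[OF \<rho> \<theta>_polar(1) \<eta>_polar(1)]
        chords[OF \<theta>_dD _ close(1)] chords[OF \<eta>(1) _ close(2)] near
      unfolding P_def by blast
    then obtain t where "t \<in> {min t0 t1..max t0 t1}"
      and "specular (P t - c k) (P t - \<theta>) (\<eta> - P t)" "specular (P t - c k) (P t - \<eta>) (\<theta> - P t)"
      by blast
    then show "\<exists>p. admissible_walk [\<theta>, p, \<eta>] \<and> admissible_walk [\<eta>, p, \<theta>]"
      using admissible_walks_via_reflection[OF k] near chords[OF \<theta>_dD _ close(1)] chords[OF \<eta>(1) _ close(2)]
      by blast
  qed
qed

subsection \<open>Joining points of a cell\<close>

definition joined :: "complex \<Rightarrow> complex \<Rightarrow> bool" where
  "joined u v \<longleftrightarrow> (\<exists>vs. admissible_walk vs \<and> hd vs = u \<and> last vs = v)"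

lemma joined_trans:
  assumes "joined u v" "joined v w" "v \<in> dD"
  shows "joined u w"
proof -
  obtain vs ws where "admissible_walk vs" "hd vs = u" "last vs = v"
    "admissible_walk ws" "hd ws = v" "last ws = w"
    using assms(1,2) unfolding joined_def by blast
  then show ?thesis
    using admissible_walk_join[of vs ws] assms(3) unfolding joined_def by metis
qed

lemma joined_locally:
  assumes ctrl: "one_controllable L a r b c Arc Gbox" and \<theta>: "\<theta> \<in> dD"
  shows "\<exists>\<delta>>0. \<forall>\<eta>\<in>dD. dist \<eta> \<theta> < \<delta> \<longrightarrow> joined \<theta> \<eta> \<and> joined \<eta> \<theta>"
proof -
  obtain k where "k \<in> {1..b}" "\<theta> \<in> illum L a r b c Arc Gbox k"
    using ctrl \<theta> unfolding one_controllable_def by blast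
  from local_reflection[OF this] obtain \<delta> where "\<delta> > 0"
    "\<forall>\<eta>\<in>dD. dist \<eta> \<theta> < \<delta> \<longrightarrow> (\<exists>p. admissible_walk [\<theta>, p, \<eta>] \<and> admissible_walk [\<eta>, p, \<theta>])"
    by blast
  then show ?thesis unfolding joined_def by (intro exI[of _ \<delta>]) fastforce
qed

lemma dD_joined:
  assumes ctrl: "one_controllable L a r b c Arc Gbox" and \<theta>: "\<theta> \<in> dD" and \<eta>: "\<eta> \<in> dD"
  shows "\<theta> = \<eta> \<or> joined \<theta> \<eta>"
proof -
  have "\<theta> = \<eta> \<or> joined \<theta> \<eta> \<and> joined \<eta> \<theta>"
  proof (rule connected_equivalence_relation[where R = "\<lambda>x y. x = y \<or> joined x y \<and> joined y x", OF _ \<theta> \<eta>])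
    show "connected dD" by (rule connected_sphere) simp
  next
    fix x y z assume "x = y \<or> joined x y \<and> joined y x" "y = z \<or> joined y z \<and> joined z y" "y \<in> dD"
    then show "x = z \<or> joined x z \<and> joined z x" using joined_trans by blast
  next
    fix x assume x: "x \<in> dD"
    obtain \<delta> where \<delta>: "\<delta> > 0" "\<forall>\<eta>\<in>dD. dist \<eta> x < \<delta> \<longrightarrow> joined x \<eta> \<and> joined \<eta> x"
      using joined_locally[OF ctrl x] by blast
    show "\<exists>T. openin (top_of_set dD) T \<and> x \<in> T \<and> (\<forall>y\<in>T. x = y \<or> joined x y \<and> joined y x)"
      using x \<delta> by (intro exI[of _ "dD \<inter> ball x \<delta>"]) (auto simp: dist_commute)
  qed auto
  then show ?thesis by blast
qed

definition radial_proj :: "complex \<Rightarrow> complex" where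
  "radial_proj z = ctr + (r / cmod (z - ctr)) *\<^sub>R (z - ctr)"

lemma radial_proj_joined:
  assumes z: "z \<in> dG" "z \<notin> Cor"
  shows "radial_proj z \<in> dD" and "joined (radial_proj z) z" and "joined z (radial_proj z)"
proof -
  define q where "q = r / cmod (z - ctr)"
  have "z \<notin> cball ctr r" using z(1) cball_disjoint_dG by auto
  then have D: "cmod (z - ctr) > r" by (simp add: dist_norm norm_minus_commute)
  then have q: "0 < q" "q < 1" using r_pos by (auto simp: q_def divide_less_eq_1 zero_less_divide_iff)
  have rz: "radial_proj z = ctr + q *\<^sub>R (z - ctr)" by (simp add: radial_proj_def q_def)
  have "dist ctr (radial_proj z) = q * cmod (z - ctr)" using q by (simp add: rz dist_norm)
  then show rS: "radial_proj z \<in> dD" using D r_pos by (auto simp: q_def)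
  have "z - radial_proj z = (1 - q) *\<^sub>R (z - ctr)" "radial_proj z - ctr = q *\<^sub>R (z - ctr)"
    by (simp_all add: rz algebra_simps)
  then have out: "(z - radial_proj z) \<bullet> (radial_proj z - ctr) > 0"
    using q D r_pos by (auto simp: power2_norm_eq_inner[symmetric] zero_less_mult_iff)
  have "radial_proj z \<in> closed_segment ctr z"
    unfolding in_segment(1) rz using q by (intro exI[of _ q]) (auto simp: algebra_simps)
  then have "open_segment (radial_proj z) z \<subseteq> closed_segment ctr z - {z}"
    using subset_closed_segment[of "radial_proj z" z ctr z] segment_open_subset_closed
    unfolding open_segment_def by blast
  then have "open_segment (radial_proj z) z \<inter> dG = {}" using segment_from_center[OF z(1)] by blast
  then have "admissible_walk [radial_proj z, z]" "admissible_walk [z, radial_proj z]"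
    using admissible_edges_from_dD[OF rS z out] by simp_all
  then show "joined (radial_proj z) z" "joined z (radial_proj z)"
    unfolding joined_def by (metis last.simps list.sel(1) list.distinct(1))+
qed

lemma joined_dD_boundary:
  assumes ctrl: "one_controllable L a r b c Arc Gbox" and \<theta>: "\<theta> \<in> dD" and z: "z \<in> dG" "z \<notin> Cor"
  shows "joined \<theta> z"
  using dD_joined[OF ctrl \<theta> radial_proj_joined(1)[OF z]] radial_proj_joined[OF z] joined_trans by metis

lemma joined_boundary_boundary:
  assumes ctrl: "one_controllable L a r b c Arc Gbox"
    and z: "z \<in> dG" "z \<notin> Cor" and z': "z' \<in> dG" "z' \<notin> Cor"
  shows "joined z z'"
  using joined_trans[OF radial_proj_joined(3)[OF z] joined_dD_boundary[OF ctrl _ z'] radial_proj_joined(1)[OF z]]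
    radial_proj_joined(1)[OF z] by blast

lemma exit_height: "\<exists>y0. -a \<le> y0 \<and> y0 \<le> a \<and> Complex 0 y0 \<notin> Cor \<and> Complex L y0 \<notin> Cor"
proof -
  define bad where "bad = (\<Union>k\<in>{1..b}. {y. dist (Complex 0 y) (c k) = rho k} \<union> {y. dist (Complex L y) (c k) = rho k})"
  have "finite bad" by (simp add: bad_def finite_vertical_circle_points)
  moreover have "infinite {-a<..<a}" using a_pos by (simp add: infinite_Ioo)
  ultimately have "infinite ({-a<..<a} - bad)" by (simp add: Diff_infinite_finite)
  then obtain y0 where y0: "y0 \<in> {-a<..<a}" "y0 \<notin> bad"
    using infinite_imp_nonempty by blast
  have "Complex x y0 \<notin> Cor" if "x = 0 \<or> x = L" for x
  proof
    assume "Complex x y0 \<in> Cor"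
    then consider k where "k \<in> {1..b}" "Complex x y0 \<in> Arc k"
      | "Complex x y0 \<in> left_opening a" "Complex x y0 \<in> right_opening L a"
      using corner_cases by blast
    then show False
    proof cases
      case 1
      then have "dist (Complex x y0) (c k) = rho k" using dist_arc_center by blast
      then have "y0 \<in> bad" using that 1(1) unfolding bad_def by auto
      then show False using y0(2) by simp
    next
      case 2
      then show False using L_pos by (auto simp: left_opening_def right_opening_def)
    qed
  qed
  then show ?thesis using y0(1) by (intro exI[of _ y0]) auto
qed

subsection \<open>Paths through the chain of cells\<close>

definition cell_offset :: "nat \<Rightarrow> complex" where
  "cell_offset l = complex_of_real (real (l - 1) * L)"

lemma cell_junction:
  assumes "1 \<le> l"
  shows "Complex L y + cell_offset l = Complex (real l * L) y"
    and "Complex 0 y + cell_offset (Suc l) = Complex (real l * L) y"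
  using assms by (simp_all add: cell_offset_def complex_eq_iff of_nat_diff algebra_simps)

lemma Complex_in_shift_left_opening: "-a \<le> y \<Longrightarrow> y \<le> a \<Longrightarrow> Complex s y \<in> shift s (left_opening a)"
  unfolding shift_def left_opening_def by (rule image_eqI[of _ _ "Complex 0 y"]) (auto simp: complex_eq_iff)

lemma system_admissible_walks:
  assumes ne: "ws \<noteq> []" and len: "length ls = length ws"
    and walks: "\<And>i. i < length ws \<Longrightarrow> admissible_walk (ws ! i) \<and> ls ! i \<in> {1..N}"
    and links: "\<And>i. Suc i < length ws \<Longrightarrow>
        last (ws ! i) + cell_offset (ls ! i) = hd (ws ! Suc i) + cell_offset (ls ! Suc i) \<and>
        ls ! i \<noteq> ls ! Suc i \<and>
        (\<exists>l\<in>{1..<N}. hd (ws ! Suc i) + cell_offset (ls ! Suc i) \<in> shift (real l * L) (left_opening a))"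
  shows "\<exists>\<gamma>. system_admissible L a r b c Arc Gbox N \<gamma> \<and>
      \<gamma> 0 = hd (hd ws) + cell_offset (hd ls) \<and> \<gamma> 1 = last (last ws) + cell_offset (last ls)"
proof -
  define m where "m = length ws"
  define Qs where "Qs = map (\<lambda>i. map (\<lambda>z. z + cell_offset (ls ! i)) (ws ! i)) [0..<m]"
  have Qs: "Qs \<noteq> []" "length Qs = m" "\<And>i. i < m \<Longrightarrow> Qs ! i = map (\<lambda>z. z + cell_offset (ls ! i)) (ws ! i)"
    using ne by (simp_all add: Qs_def m_def)
  have ws2: "2 \<le> length (ws ! i)" if "i < m" for i
    using walks[of i] that admissible_walk_nth by (auto simp: m_def)
  then have ws_ne: "ws ! i \<noteq> []" if "i < m" for i using that by fastforce
  have "chained Qs"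
    unfolding chained_def
  proof (intro conjI ballI allI impI)
    fix Q assume "Q \<in> set Qs"
    then show "2 \<le> length Q" using ws2 by (auto simp: Qs_def)
  next
    fix i assume i: "Suc i < length Qs"
    then show "last (Qs ! i) = hd (Qs ! Suc i)"
      using Qs links[of i] ws_ne by (simp add: m_def last_map hd_map)
  qed
  then obtain ss where ss: "length ss = Suc m" "ss ! 0 = 0" "ss ! m = 1"
      "\<And>i. i < m \<Longrightarrow> ss ! i < ss ! Suc i"
    and joined_pieces: "\<And>i t. i < m \<Longrightarrow> t \<in> {0..1} \<Longrightarrow>
       polyline (join_walks Qs) (ss ! i + t * (ss ! Suc i - ss ! i)) = polyline (Qs ! i) t"
    using polyline_join_walks_breakpoints[of Qs] Qs(1,2) by metis
  have ls_ne: "ls \<noteq> []" using ne len by auto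
  define \<gamma> where "\<gamma> = polyline (join_walks Qs)"
  have piece: "\<gamma> (ss ! i + t * (ss ! Suc i - ss ! i)) = polyline (ws ! i) t + cell_offset (ls ! i)"
    if i: "i < m" and t: "t \<in> {0..1}" for i t
    using joined_pieces[OF i t] Qs(3)[OF i] polyline_translate[OF ws_ne[OF i]] by (simp add: \<gamma>_def)
  have "system_admissible L a r b c Arc Gbox N \<gamma>"
    unfolding system_admissible_def
  proof (intro conjI exI[of _ ss] exI[of _ ls] allI impI)
    show "continuous_on {0..1} \<gamma>" unfolding \<gamma>_def by (rule continuous_on_polyline)
    show "2 \<le> length ss" "length ls = length ss - 1" using ss(1) ne len by (auto simp: m_def Suc_le_eq)
    show "ss ! 0 = 0" "ss ! (length ss - 1) = 1" using ss by simp_all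
    show "ss ! i < ss ! Suc i" if "Suc i < length ss" for i using that ss by simp
    show "ls ! i \<in> {1..N}" if "i < length ls" for i using walks[of i] that len by simp
    show "cell_admissible L a r b c Arc Gbox
        (\<lambda>t. \<gamma> (ss ! i + t * (ss ! Suc i - ss ! i)) - complex_of_real (real (ls ! i - 1) * L))"
      if "i < length ls" for i
      using cell_admissible_polyline[of "ws ! i"] walks[of i] piece[of i] that len
      by (simp add: m_def cell_offset_def)
    show "ls ! (i - 1) \<noteq> ls ! i" if "0 < i \<and> i < length ls" for i
      using links[of "i - 1"] that len by simp
    show "\<exists>l\<in>{1..<N}. \<gamma> (ss ! i) \<in> shift (real l * L) (left_opening a)"
      if "0 < i \<and> i < length ls" for i
      using piece[of i 0] polyline_0[OF ws_ne[of i]] links[of "i - 1"] that len by (simp add: m_def)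
  qed
  moreover have "\<gamma> 0 = hd (hd ws) + cell_offset (hd ls)"
    using piece[of 0 0] polyline_0[OF ws_ne[of 0]] ss(2) ne ls_ne by (simp add: m_def hd_conv_nth)
  moreover have "\<gamma> 1 = last (last ws) + cell_offset (last ls)"
    using piece[of "m - 1" 1] polyline_1[OF ws_ne[of "m - 1"]] ss(3) ne ls_ne len
    by (simp add: m_def last_conv_nth)
  ultimately show ?thesis by blast
qed

lemma walk_to_left_exit:
  assumes y0: "-a \<le> y0" "y0 \<le> a" and j: "1 \<le> j" "j \<le> N"
    and A: "admissible_walk A" "hd A = \<theta>" "last A = Complex 0 y0"
    and B: "admissible_walk B" "hd B = Complex L y0" "last B = Complex 0 y0"
  shows "\<exists>\<gamma>. system_admissible L a r b c Arc Gbox N \<gamma> \<and> \<gamma> 0 = \<theta> + cell_offset j \<and> \<gamma> 1 \<in> left_opening a"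
proof -
  define ws where "ws = map (\<lambda>i. if i = 0 then A else B) [0..<j]"
  define ls where "ls = map (\<lambda>i. j - i) [0..<j]"
  have "\<exists>\<gamma>. system_admissible L a r b c Arc Gbox N \<gamma> \<and>
      \<gamma> 0 = hd (hd ws) + cell_offset (hd ls) \<and> \<gamma> 1 = last (last ws) + cell_offset (last ls)"
  proof (rule system_admissible_walks)
    show "ws \<noteq> []" "length ls = length ws" using j by (simp_all add: ws_def ls_def)
    show "admissible_walk (ws ! i) \<and> ls ! i \<in> {1..N}" if "i < length ws" for i
      using that j A B by (auto simp: ws_def ls_def)
    show "last (ws ! i) + cell_offset (ls ! i) = hd (ws ! Suc i) + cell_offset (ls ! Suc i) \<and>
        ls ! i \<noteq> ls ! Suc i \<and>
        (\<exists>l\<in>{1..<N}. hd (ws ! Suc i) + cell_offset (ls ! Suc i) \<in> shift (real l * L) (left_opening a))"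
      if i: "Suc i < length ws" for i
    proof -
      have l: "1 \<le> j - Suc i" "j - Suc i \<in> {1..<N}" using i j by (auto simp: ws_def)
      have ls: "ls ! i = Suc (j - Suc i)" "ls ! Suc i = j - Suc i" using i by (auto simp: ws_def ls_def)
      have "last (ws ! i) = Complex 0 y0" "hd (ws ! Suc i) = Complex L y0"
        using i A B by (auto simp: ws_def)
      then have "last (ws ! i) + cell_offset (ls ! i) = Complex (real (j - Suc i) * L) y0"
        "hd (ws ! Suc i) + cell_offset (ls ! Suc i) = Complex (real (j - Suc i) * L) y0"
        unfolding ls using cell_junction[OF l(1)] by simp_all
      then show ?thesis
        using l(2) ls Complex_in_shift_left_opening[OF y0, of "real (j - Suc i) * L"]
        by (intro conjI bexI[of _ "j - Suc i"]) auto
    qed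
  qed
  moreover have "hd (hd ws) + cell_offset (hd ls) = \<theta> + cell_offset j"
    "last (last ws) + cell_offset (last ls) = Complex 0 y0"
    using j A B by (simp_all add: ws_def ls_def hd_map last_map cell_offset_def)
  moreover have "Complex 0 y0 \<in> left_opening a" using y0 by (auto simp: left_opening_def)
  ultimately show ?thesis by metis
qed

lemma walk_to_right_exit:
  assumes y0: "-a \<le> y0" "y0 \<le> a" and j: "1 \<le> j" "j \<le> N"
    and A: "admissible_walk A" "hd A = \<theta>" "last A = Complex L y0"
    and B: "admissible_walk B" "hd B = Complex 0 y0" "last B = Complex L y0"
  shows "\<exists>\<gamma>. system_admissible L a r b c Arc Gbox N \<gamma> \<and> \<gamma> 0 = \<theta> + cell_offset j \<and>
      \<gamma> 1 \<in> shift (real (N - 1) * L) (right_opening L a)"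
proof -
  define ws where "ws = map (\<lambda>i. if i = 0 then A else B) [0..<Suc (N - j)]"
  define ls where "ls = map (\<lambda>i. j + i) [0..<Suc (N - j)]"
  have "\<exists>\<gamma>. system_admissible L a r b c Arc Gbox N \<gamma> \<and>
      \<gamma> 0 = hd (hd ws) + cell_offset (hd ls) \<and> \<gamma> 1 = last (last ws) + cell_offset (last ls)"
  proof (rule system_admissible_walks)
    show "ws \<noteq> []" "length ls = length ws" by (simp_all add: ws_def ls_def)
    show "admissible_walk (ws ! i) \<and> ls ! i \<in> {1..N}" if "i < length ws" for i
      using that j A B by (auto simp: ws_def ls_def simp del: upt_Suc)
    show "last (ws ! i) + cell_offset (ls ! i) = hd (ws ! Suc i) + cell_offset (ls ! Suc i) \<and>
        ls ! i \<noteq> ls ! Suc i \<and>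
        (\<exists>l\<in>{1..<N}. hd (ws ! Suc i) + cell_offset (ls ! Suc i) \<in> shift (real l * L) (left_opening a))"
      if i: "Suc i < length ws" for i
    proof -
      have l: "1 \<le> j + i" "j + i \<in> {1..<N}" using i j by (auto simp: ws_def)
      have ls: "ls ! i = j + i" "ls ! Suc i = Suc (j + i)"
        using i by (simp_all add: ws_def ls_def del: upt_Suc)
      have "last (ws ! i) = Complex L y0" "hd (ws ! Suc i) = Complex 0 y0"
        using i A B by (auto simp: ws_def simp del: upt_Suc)
      then have "last (ws ! i) + cell_offset (ls ! i) = Complex (real (j + i) * L) y0"
        "hd (ws ! Suc i) + cell_offset (ls ! Suc i) = Complex (real (j + i) * L) y0"
        unfolding ls using cell_junction[OF l(1)] by simp_all
      then show ?thesis
        using l(2) ls Complex_in_shift_left_opening[OF y0, of "real (j + i) * L"]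
        by (intro conjI bexI[of _ "j + i"]) auto
    qed
  qed
  moreover have "hd (hd ws) + cell_offset (hd ls) = \<theta> + cell_offset j"
    "last (last ws) + cell_offset (last ls) = Complex L y0 + cell_offset N"
    using j A B by (simp_all add: ws_def ls_def hd_map last_map del: upt_Suc)
  moreover have "Complex L y0 + cell_offset N \<in> shift (real (N - 1) * L) (right_opening L a)"
    using y0 unfolding shift_def right_opening_def cell_offset_def by auto
  ultimately show ?thesis by metis
qed

end

theorem lemma3:
  fixes L a r :: real and b N j :: nat and c :: "nat \<Rightarrow> complex" and rho :: "nat \<Rightarrow> real"
    and Arc :: "nat \<Rightarrow> complex set" and Gbox :: "complex set" and \<theta> :: complex
  assumes geom: "cell_geometry L a r b c rho Arc Gbox"
    and ctrl: "one_controllable L a r b c Arc Gbox"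
    and j: "1 \<le> j" "j \<le> N"
    and theta: "\<theta> \<in> sphere (disk_center L + complex_of_real (real (j - 1) * L)) r"
  shows "(\<exists>\<gamma>. system_admissible L a r b c Arc Gbox N \<gamma> \<and> \<gamma> 0 = \<theta> \<and> \<gamma> 1 \<in> left_opening a) \<and>
         (\<exists>\<gamma>. system_admissible L a r b c Arc Gbox N \<gamma> \<and> \<gamma> 0 = \<theta> \<and>
               \<gamma> 1 \<in> shift (real (N - 1) * L) (right_opening L a))"
proof -
  interpret billiard_cell L a r b c rho Arc Gbox by (rule billiard_cell.intro[OF geom])
  obtain y0 where y0: "-a \<le> y0" "y0 \<le> a" "Complex 0 y0 \<notin> Cor" "Complex L y0 \<notin> Cor"
    using exit_height by blast
  have exits: "Complex 0 y0 \<in> dG" "Complex L y0 \<in> dG"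
    using y0 openings_subset_dG by (auto simp: left_opening_def right_opening_def)
  define \<theta>' where "\<theta>' = \<theta> - cell_offset j"
  have \<theta>': "\<theta>' \<in> dD" using theta by (simp add: \<theta>'_def cell_offset_def dist_norm algebra_simps)
  have "joined \<theta>' (Complex 0 y0)" "joined (Complex L y0) (Complex 0 y0)"
    "joined \<theta>' (Complex L y0)" "joined (Complex 0 y0) (Complex L y0)"
    using joined_dD_boundary[OF ctrl \<theta>'] joined_boundary_boundary[OF ctrl] exits y0(3,4) by blast+
  then show ?thesis
    using walk_to_left_exit[OF y0(1,2) j] walk_to_right_exit[OF y0(1,2) j]
    unfolding joined_def \<theta>'_def by (metis diff_add_cancel)
qed

end
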